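(* Let $\square$ be one of $\boxplus$, $\Delta_1[\tau]^*$, $\Delta_1[\tau,\gamma_-]^*$, $\Delta_1[\tau,\gamma_+]^*$, $\Delta_1[\tau,\gamma_+,\gamma_-]^*$, $\Delta_1[\tau,\gamma_-,\gamma_+,\mathrm{diag}]^*$. Then: (a) for every $\square$-morphism $\phi:[1]^m\to[1]^n$ and every $k\geq0$, there is a unique morphism of cubical sets $\square[\phi^{[k]}]:\square[([1]^m)^{[k]}]\to\square[([1]^n)^{[k]}]$ with $\iota\circ\square[\phi^{[k]}]=\mathrm{ner}_\square(\phi^{[k]})\circ\iota$, where $\iota$ denotes the inclusions $\square[P]\hookrightarrow\mathrm{ner}_\square P$; (b) for every $n$ and every injective monotone $\delta:[k_1]\to[k_2]$, there is a unique morphism of cubical sets $\square[([1]^n)^{\delta}]:\square[([1]^n)^{[k_2]}]\to\square[([1]^n)^{[k_1]}]$ with $\iota\circ\square[([1]^n)^{\delta}]=\mathrm{ner}_\square(([1]^n)^{\delta})\circ\iota$.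
   Context: $[k]=\{0<1<\cdots<k\}$; $[1]^n$ the product poset ($[1]^0=[0]$). $\tau(x,y)=(y,x)$, $\gamma_-(x,y)=\min(x,y)$, $\gamma_+(x,y)=\max(x,y)$, $\mathrm{diag}(x)=(x,x)$. For functions $\phi_1,\dots,\phi_j$, $\Delta_1[\phi_1,\dots,\phi_j]^*$ is the smallest subcategory of $\mathbf{Set}$ containing all functions between $[0]$ and $[1]$ and $\phi_1,\dots,\phi_j$, closed under Cartesian products of functions; its objects are the $[1]^n$. $\boxplus$ has objects $[1]^n$ and morphisms the monotone functions mapping intervals (non-empty $[x,z]=\{y:x\leq y\leq z\}$) onto intervals. For a poset $Q$, $Q^{[k]}$ is the poset of monotone maps $[k]\to Q$ with pointwise order; $\phi^{[k]}$ is postcomposition with $\phi$ and $Q^{\delta}$ is precomposition with $\delta$. A cubical set is a presheaf $\square^{op}\to\mathbf{Set}$. For a poset $P$, $\mathrm{ner}_\square P$ is the cubical set $[1]^n\mapsto\mathbf{Pos}([1]^n,P)$, and $\square[P]\subseteq\mathrm{ner}_\square P$ is the subpresheaf of monotone $\theta:[1]^n\to P$ whose image lies in a Boolean interval $I$ of $P$ (an interval which is a Boolean lattice) such that the corestriction $[1]^n\to I$, after composing with some poset isomorphism $I\cong[1]^k$, is a $\square$-morphism. *)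

theory Defs
  imports "HOL-Library.FuncSet"
begin

text \<open>An element of [1]^n is a boolean list of length n (False = 0, True = 1);
  [1]^0 = [0] is the singleton containing the empty list.  The order is the
  componentwise (product) order.  [1]^m x [1]^n is identified with [1]^(m+n)
  by list concatenation.\<close>

definition cube :: "nat \<Rightarrow> bool list set" where
  "cube n = {xs. length xs = n}"

definition cube_le :: "bool list \<Rightarrow> bool list \<Rightarrow> bool" where
  "cube_le xs ys \<longleftrightarrow> list_all2 (\<le>) xs ys"

definition mono_betw :: "'a set \<Rightarrow> ('a \<Rightarrow> 'a \<Rightarrow> bool) \<Rightarrow> ('b \<Rightarrow> 'b \<Rightarrow> bool) \<Rightarrow> ('a \<Rightarrow> 'b) \<Rightarrow> bool" where
  "mono_betw A leA leB f \<longleftrightarrow> (\<forall>x\<in>A. \<forall>y\<in>A. leA x y \<longrightarrow> leB (f x) (f y))"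

definition cube_interval :: "nat \<Rightarrow> bool list \<Rightarrow> bool list \<Rightarrow> bool list set" where
  "cube_interval n x z = {y \<in> cube n. cube_le x y \<and> cube_le y z}"

definition tau :: "bool list \<Rightarrow> bool list" where
  "tau xs = [xs ! 1, xs ! 0]"

definition gamma_minus :: "bool list \<Rightarrow> bool list" where
  "gamma_minus xs = [min (xs ! 0) (xs ! 1)]"

definition gamma_plus :: "bool list \<Rightarrow> bool list" where
  "gamma_plus xs = [max (xs ! 0) (xs ! 1)]"

definition diag :: "bool list \<Rightarrow> bool list" where
  "diag xs = [xs ! 0, xs ! 0]"

text \<open>dmor G m n f: f is a morphism [1]^m \<rightarrow> [1]^n of the smallest subcategory
  of Set containing all (monotone) functions between [0] and [1] and the
  generators in G, closed under Cartesian products of functions.  Morphisms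
  are considered as functions on the domain cube m (rule dm_ext).\<close>

inductive dmor :: "(nat \<times> nat \<times> (bool list \<Rightarrow> bool list)) set \<Rightarrow> nat \<Rightarrow> nat \<Rightarrow> (bool list \<Rightarrow> bool list) \<Rightarrow> bool"
  for G where
  dm_base: "a \<le> 1 \<Longrightarrow> b \<le> 1 \<Longrightarrow> f \<in> cube a \<rightarrow> cube b \<Longrightarrow> mono_betw (cube a) cube_le cube_le f
     \<Longrightarrow> dmor G a b f"
| dm_gen: "(a, b, f) \<in> G \<Longrightarrow> dmor G a b f"
| dm_comp: "dmor G a b f \<Longrightarrow> dmor G b c g \<Longrightarrow> dmor G a c (g \<circ> f)"
| dm_prod: "dmor G a b f \<Longrightarrow> dmor G c d g
     \<Longrightarrow> dmor G (a + c) (b + d) (\<lambda>xs. f (take a xs) @ g (drop a xs))"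
| dm_ext: "dmor G a b f \<Longrightarrow> (\<forall>x\<in>cube a. g x = f x) \<Longrightarrow> dmor G a b g"

definition boxplus_mor :: "nat \<Rightarrow> nat \<Rightarrow> (bool list \<Rightarrow> bool list) \<Rightarrow> bool" where
  "boxplus_mor m n f \<longleftrightarrow>
     f \<in> cube m \<rightarrow> cube n \<and> mono_betw (cube m) cube_le cube_le f \<and>
     (\<forall>x\<in>cube m. \<forall>z\<in>cube m. cube_le x z \<longrightarrow>
        (\<exists>u\<in>cube n. \<exists>v\<in>cube n. cube_le u v \<and> f ` cube_interval m x z = cube_interval n u v))"

datatype sqcat = Boxplus | D_tau | D_tau_gm | D_tau_gp | D_tau_gp_gm | D_tau_gm_gp_diag

definition gens :: "sqcat \<Rightarrow> (nat \<times> nat \<times> (bool list \<Rightarrow> bool list)) set" where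
  "gens C = (case C of
      Boxplus \<Rightarrow> {}
    | D_tau \<Rightarrow> {(2, 2, tau)}
    | D_tau_gm \<Rightarrow> {(2, 2, tau), (2, 1, gamma_minus)}
    | D_tau_gp \<Rightarrow> {(2, 2, tau), (2, 1, gamma_plus)}
    | D_tau_gp_gm \<Rightarrow> {(2, 2, tau), (2, 1, gamma_plus), (2, 1, gamma_minus)}
    | D_tau_gm_gp_diag \<Rightarrow> {(2, 2, tau), (2, 1, gamma_minus), (2, 1, gamma_plus), (1, 2, diag)})"

definition sq_mor :: "sqcat \<Rightarrow> nat \<Rightarrow> nat \<Rightarrow> (bool list \<Rightarrow> bool list) \<Rightarrow> bool" where
  "sq_mor C m n f = (if C = Boxplus then boxplus_mor m n f else dmor (gens C) m n f)"

text \<open>A poset is given by a carrier set and an order relation.  Q^[k] is the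
  set of monotone maps [k] = {0..k} \<rightarrow> Q (extensional functions), with the
  pointwise order.\<close>

definition chains :: "nat \<Rightarrow> 'a set \<Rightarrow> ('a \<Rightarrow> 'a \<Rightarrow> bool) \<Rightarrow> (nat \<Rightarrow> 'a) set" where
  "chains k Q le = {c \<in> {..k} \<rightarrow>\<^sub>E Q. \<forall>i j. i \<le> j \<and> j \<le> k \<longrightarrow> le (c i) (c j)}"

definition chain_le :: "nat \<Rightarrow> ('a \<Rightarrow> 'a \<Rightarrow> bool) \<Rightarrow> (nat \<Rightarrow> 'a) \<Rightarrow> (nat \<Rightarrow> 'a) \<Rightarrow> bool" where
  "chain_le k le c d \<longleftrightarrow> (\<forall>i\<le>k. le (c i) (d i))"

text \<open>phi^[k]: postcomposition;  Q^delta: precomposition.\<close>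

definition post_map :: "nat \<Rightarrow> ('a \<Rightarrow> 'b) \<Rightarrow> (nat \<Rightarrow> 'a) \<Rightarrow> (nat \<Rightarrow> 'b)" where
  "post_map k f c = restrict (f \<circ> c) {..k}"

definition pre_map :: "nat \<Rightarrow> (nat \<Rightarrow> nat) \<Rightarrow> (nat \<Rightarrow> 'a) \<Rightarrow> (nat \<Rightarrow> 'a)" where
  "pre_map k1 \<delta> c = restrict (c \<circ> \<delta>) {..k1}"

definition ner :: "'a set \<Rightarrow> ('a \<Rightarrow> 'a \<Rightarrow> bool) \<Rightarrow> nat \<Rightarrow> (bool list \<Rightarrow> 'a) set" where
  "ner P le n = {\<theta> \<in> cube n \<rightarrow>\<^sub>E P. mono_betw (cube n) cube_le le \<theta>}"

definition interval :: "'a set \<Rightarrow> ('a \<Rightarrow> 'a \<Rightarrow> bool) \<Rightarrow> 'a \<Rightarrow> 'a \<Rightarrow> 'a set" where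
  "interval P le x z = {y \<in> P. le x y \<and> le y z}"

text \<open>Boolean interval: a (nonempty) interval of P that is order-isomorphic to
  some [1]^k; the theta of sq_set must be a box-morphism into it after
  composing with some such isomorphism.\<close>

definition sq_set :: "sqcat \<Rightarrow> 'a set \<Rightarrow> ('a \<Rightarrow> 'a \<Rightarrow> bool) \<Rightarrow> nat \<Rightarrow> (bool list \<Rightarrow> 'a) set" where
  "sq_set C P le n = {\<theta> \<in> ner P le n.
     \<exists>x\<in>P. \<exists>z\<in>P. \<exists>k. \<exists>\<iota> :: 'a \<Rightarrow> bool list.
        le x z \<and>
        bij_betw \<iota> (interval P le x z) (cube k) \<and>
        (\<forall>a\<in>interval P le x z. \<forall>b\<in>interval P le x z. le a b \<longleftrightarrow> cube_le (\<iota> a) (\<iota> b)) \<and>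
        \<theta> ` cube n \<subseteq> interval P le x z \<and>
        sq_mor C n k (\<iota> \<circ> \<theta>)}"

text \<open>The presheaf action of a box-morphism psi : [1]^a \<rightarrow> [1]^b on X b is
  precomposition with psi.\<close>

definition cset_mor :: "sqcat \<Rightarrow> (nat \<Rightarrow> (bool list \<Rightarrow> 'a) set) \<Rightarrow> (nat \<Rightarrow> (bool list \<Rightarrow> 'b) set)
    \<Rightarrow> (nat \<Rightarrow> (bool list \<Rightarrow> 'a) \<Rightarrow> (bool list \<Rightarrow> 'b)) \<Rightarrow> bool" where
  "cset_mor C X Y F \<longleftrightarrow>
     (\<forall>n. \<forall>\<theta>\<in>X n. F n \<theta> \<in> Y n) \<and>
     (\<forall>a b \<psi>. sq_mor C a b \<psi> \<longrightarrow>
        (\<forall>\<theta>\<in>X b. F a (restrict (\<theta> \<circ> \<psi>) (cube a)) = restrict (F b \<theta> \<circ> \<psi>) (cube a)))"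

text \<open>iota \<circ> F = ner(f) \<circ> iota, where ner(f) is postcomposition with f.\<close>

definition commutes_with_ner :: "(nat \<Rightarrow> (bool list \<Rightarrow> 'a) set) \<Rightarrow> ('a \<Rightarrow> 'b)
    \<Rightarrow> (nat \<Rightarrow> (bool list \<Rightarrow> 'a) \<Rightarrow> (bool list \<Rightarrow> 'b)) \<Rightarrow> bool" where
  "commutes_with_ner X f F \<longleftrightarrow> (\<forall>n. \<forall>\<theta>\<in>X n. F n \<theta> = restrict (f \<circ> \<theta>) (cube n))"

definition unique_lift :: "sqcat \<Rightarrow> 'a set \<Rightarrow> ('a \<Rightarrow> 'a \<Rightarrow> bool) \<Rightarrow> 'b set \<Rightarrow> ('b \<Rightarrow> 'b \<Rightarrow> bool)
    \<Rightarrow> ('a \<Rightarrow> 'b) \<Rightarrow> bool" where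
  "unique_lift C P leP Q leQ f \<longleftrightarrow>
     (\<exists>F. cset_mor C (sq_set C P leP) (sq_set C Q leQ) F \<and> commutes_with_ner (sq_set C P leP) f F) \<and>
     (\<forall>F G. cset_mor C (sq_set C P leP) (sq_set C Q leQ) F \<and> commutes_with_ner (sq_set C P leP) f F \<and>
            cset_mor C (sq_set C P leP) (sq_set C Q leQ) G \<and> commutes_with_ner (sq_set C P leP) f G
        \<longrightarrow> (\<forall>n. \<forall>\<theta>\<in>sq_set C P leP n. F n \<theta> = G n \<theta>))"

end

theory Submission
  imports Defs "HOL-Combinatorics.Permutations"
begin

text \<open>Both maps are postcomposition with a map f of chains, so a lift is unique if it exists, and it
  exists as soon as f carries the cells of \<open>\<box>[P]\<close> to cells of \<open>\<box>[Q]\<close>. A cell lies in a Boolean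
  interval [x, z] of ([1]^m)^[k]. Such an interval is thin, \<open>z i \<le> x (i + 1)\<close>: otherwise some
  element of [x, z] would have no complement, as meets and joins in [x, z] are taken entrywise.
  Concatenation of chains identifies a thin interval with a face of [1]^((k + 1) m), and in these
  coordinates f is the restriction to faces of a box-morphism: \<open>\<phi>\<close>^(k + 1) for \<open>\<phi>\<close>^[k], and a
  selection of blocks of coordinates for ([1]^n)^\<open>\<delta>\<close>. Box-morphisms restrict to box-morphisms
  between faces, and two identifications of a Boolean interval with a cube differ by an order
  automorphism of the cube. Such an automorphism is a box-morphism: in \<open>\<boxplus>\<close> it maps intervals onto
  intervals, and otherwise it permutes the coordinates and is therefore built from \<open>\<tau>\<close>.\<close>

section \<open>The order of the cubes\<close>

lemma in_cube [simp]: "xs \<in> cube n \<longleftrightarrow> length xs = n"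
  by (simp add: cube_def)

lemma cube_le_Nil [simp]: "cube_le [] ys \<longleftrightarrow> ys = []" "cube_le xs [] \<longleftrightarrow> xs = []"
  by (auto simp: cube_le_def)

lemma cube_le_Cons [simp]: "cube_le (x # xs) (y # ys) \<longleftrightarrow> (x \<longrightarrow> y) \<and> cube_le xs ys"
  by (auto simp: cube_le_def)

lemma cube_le_length: "cube_le xs ys \<Longrightarrow> length xs = length ys"
  by (auto simp: cube_le_def list_all2_lengthD)

lemma cube_le_iff_nth: "cube_le xs ys \<longleftrightarrow> length xs = length ys \<and> (\<forall>j<length xs. xs ! j \<longrightarrow> ys ! j)"
  by (auto simp: cube_le_def list_all2_conv_all_nth le_bool_def)

lemma cube_le_nthD: "cube_le xs ys \<Longrightarrow> j < length xs \<Longrightarrow> xs ! j \<Longrightarrow> ys ! j"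
  by (auto simp: cube_le_iff_nth)

lemma cube_le_refl [simp]: "cube_le xs xs"
  by (simp add: cube_le_iff_nth)

lemma cube_le_trans: "cube_le xs ys \<Longrightarrow> cube_le ys zs \<Longrightarrow> cube_le xs zs"
  by (auto simp: cube_le_iff_nth)

lemma cube_le_antisym: "cube_le xs ys \<Longrightarrow> cube_le ys xs \<Longrightarrow> xs = ys"
  by (auto simp: cube_le_iff_nth intro: nth_equalityI)

lemma cube_le_append:
  "length xs1 = length ys1 \<Longrightarrow> cube_le (xs1 @ xs2) (ys1 @ ys2) \<longleftrightarrow> cube_le xs1 ys1 \<and> cube_le xs2 ys2"
  by (auto simp: cube_le_def list_all2_append)

lemma cube_le_take: "cube_le xs ys \<Longrightarrow> cube_le (take n xs) (take n ys)"
  by (auto simp: cube_le_def list_all2_takeI)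

lemma cube_le_drop: "cube_le xs ys \<Longrightarrow> cube_le (drop n xs) (drop n ys)"
  by (auto simp: cube_le_def list_all2_dropI)

lemma cube_interval_append:
  assumes "length x = a + c" "length z = a + c"
  shows "cube_interval (a + c) x z =
    (\<lambda>(p, q). p @ q) ` (cube_interval a (take a x) (take a z) \<times> cube_interval c (drop a x) (drop a z))"
    (is "?I = (\<lambda>(p, q). p @ q) ` (?I1 \<times> ?I2)")
proof
  show "?I \<subseteq> (\<lambda>(p, q). p @ q) ` (?I1 \<times> ?I2)"
  proof
    fix y assume "y \<in> ?I"
    then have "(take a y, drop a y) \<in> ?I1 \<times> ?I2"
      by (auto simp: cube_interval_def cube_le_take cube_le_drop)
    then show "y \<in> (\<lambda>(p, q). p @ q) ` (?I1 \<times> ?I2)"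
      by (rule rev_image_eqI) simp
  qed
  show "(\<lambda>(p, q). p @ q) ` (?I1 \<times> ?I2) \<subseteq> ?I"
  proof clarify
    fix p q assume "p \<in> ?I1" "q \<in> ?I2"
    moreover have "length p = a"
      using \<open>p \<in> ?I1\<close> by (simp add: cube_interval_def)
    ultimately have "cube_le x (p @ q)" "cube_le (p @ q) z"
      using assms cube_le_append[of "take a x" p "drop a x" q] cube_le_append[of p "take a z" q "drop a z"]
      by (auto simp: cube_interval_def)
    then show "p @ q \<in> ?I"
      using \<open>p \<in> ?I1\<close> \<open>q \<in> ?I2\<close> by (auto simp: cube_interval_def)
  qed
qed

section \<open>Faces of a cube\<close>

text \<open>For \<open>u \<le> v\<close> the interval [u, v] of [1]^m is a face of dimension
  \<open>face_dim u v\<close>, the number of coordinates in which u and v differ; \<open>face_coords u v\<close>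
  keeps exactly these coordinates, and \<open>face_point u v\<close> is its inverse.\<close>

fun face_dim :: "bool list \<Rightarrow> bool list \<Rightarrow> nat" where
  "face_dim (a # as) (b # bs) = (if a = b then face_dim as bs else Suc (face_dim as bs))"
| "face_dim _ _ = 0"

fun face_coords :: "bool list \<Rightarrow> bool list \<Rightarrow> bool list \<Rightarrow> bool list" where
  "face_coords (a # as) (b # bs) (y # ys) =
     (if a = b then face_coords as bs ys else y # face_coords as bs ys)"
| "face_coords _ _ _ = []"

fun face_point :: "bool list \<Rightarrow> bool list \<Rightarrow> bool list \<Rightarrow> bool list" where
  "face_point (a # as) (b # bs) w =
     (if a = b then a # face_point as bs w else hd w # face_point as bs (tl w))"
| "face_point _ _ _ = []"

lemma face_dim_le_length: "face_dim u v \<le> length u"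
  by (induction u v rule: face_dim.induct) auto

lemma length_face_coords:
  "length u = length v \<Longrightarrow> length y = length u \<Longrightarrow> length (face_coords u v y) = face_dim u v"
  by (induction u v y rule: face_coords.induct) auto

lemma length_face_point: "length u = length v \<Longrightarrow> length (face_point u v w) = length u"
  by (induction u v w rule: face_point.induct) auto

lemma face_coords_face_point:
  "length u = length v \<Longrightarrow> length w = face_dim u v \<Longrightarrow> face_coords u v (face_point u v w) = w"
  by (induction u v w rule: face_point.induct) (auto simp: length_Suc_conv)

lemma face_point_face_coords:
  "cube_le u y \<Longrightarrow> cube_le y v \<Longrightarrow> face_point u v (face_coords u v y) = y"
  by (induction u v y rule: face_coords.induct) auto

lemma face_point_between:
  "cube_le u v \<Longrightarrow> cube_le u (face_point u v w) \<and> cube_le (face_point u v w) v"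
proof (induction u v w rule: face_point.induct)
  case (1 a as b bs w)
  then show ?case by (cases a; cases b) auto
qed auto

lemma face_coords_mono: "cube_le y y' \<Longrightarrow> cube_le (face_coords u v y) (face_coords u v y')"
proof (induction u v y arbitrary: y' rule: face_coords.induct)
  case (1 a as b bs y ys)
  then show ?case by (cases y') auto
qed auto

lemma face_point_mono:
  "length u = length v \<Longrightarrow> cube_le w w' \<Longrightarrow> cube_le (face_point u v w) (face_point u v w')"
proof (induction u v w arbitrary: w' rule: face_point.induct)
  case (1 a as b bs w)
  then show ?case by (cases w; cases w') auto
qed auto

lemma face_coords_cube_le_iff:
  assumes "cube_le u p" "cube_le p v" "cube_le u q" "cube_le q v"
  shows "cube_le (face_coords u v p) (face_coords u v q) \<longleftrightarrow> cube_le p q"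
proof
  assume "cube_le (face_coords u v p) (face_coords u v q)"
  then have "cube_le (face_point u v (face_coords u v p)) (face_point u v (face_coords u v q))"
    using assms by (intro face_point_mono) (metis cube_le_length cube_le_trans)
  then show "cube_le p q"
    using assms by (simp add: face_point_face_coords)
qed (rule face_coords_mono)

lemma face_dim_append:
  "length u1 = length v1 \<Longrightarrow> face_dim (u1 @ u2) (v1 @ v2) = face_dim u1 v1 + face_dim u2 v2"
  by (induction u1 v1 rule: face_dim.induct) auto

lemma face_coords_append:
  "length u1 = length v1 \<Longrightarrow> length y1 = length u1 \<Longrightarrow>
   face_coords (u1 @ u2) (v1 @ v2) (y1 @ y2) = face_coords u1 v1 y1 @ face_coords u2 v2 y2"
  by (induction u1 v1 y1 rule: face_coords.induct) auto

lemma face_point_append: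
  "length u1 = length v1 \<Longrightarrow>
   face_point (u1 @ u2) (v1 @ v2) w =
     face_point u1 v1 (take (face_dim u1 v1) w) @ face_point u2 v2 (drop (face_dim u1 v1) w)"
proof (induction u1 v1 w rule: face_point.induct)
  case (1 a as b bs w)
  then show ?case by (cases w) (auto simp: drop_Suc)
qed auto

lemma face_dim_full: "face_dim (replicate n False) (replicate n True) = n"
  by (induction n) auto

lemma face_coords_full: "length y = n \<Longrightarrow> face_coords (replicate n False) (replicate n True) y = y"
  by (induction n arbitrary: y) (auto simp: length_Suc_conv)

lemma face_point_full: "length w = n \<Longrightarrow> face_point (replicate n False) (replicate n True) w = w"
  by (induction n arbitrary: w) (auto simp: length_Suc_conv)

lemma face_point_image:
  assumes "cube_le u v" "length u = m" "cube_le w1 w2" "length w1 = face_dim u v"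
  shows "face_point u v ` cube_interval (face_dim u v) w1 w2 =
    cube_interval m (face_point u v w1) (face_point u v w2)"
proof (intro equalityI subsetI)
  fix y assume "y \<in> face_point u v ` cube_interval (face_dim u v) w1 w2"
  then show "y \<in> cube_interval m (face_point u v w1) (face_point u v w2)"
    using assms by (auto simp: cube_interval_def length_face_point face_point_mono cube_le_length)
next
  fix y assume y: "y \<in> cube_interval m (face_point u v w1) (face_point u v w2)"
  then have "cube_le u y" "cube_le y v"
    using face_point_between[OF assms(1)] cube_le_trans by (auto simp: cube_interval_def)
  then have "y = face_point u v (face_coords u v y)"
    by (simp add: face_point_face_coords)
  moreover have "face_coords u v y \<in> cube_interval (face_dim u v) w1 w2"
    using y assms face_coords_mono[of "face_point u v w1" y u v] face_coords_mono[of y "face_point u v w2" u v]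
    by (auto simp: cube_interval_def face_coords_face_point length_face_coords cube_le_length)
  ultimately show "y \<in> face_point u v ` cube_interval (face_dim u v) w1 w2"
    by (rule rev_image_eqI[rotated])
qed

lemma face_coords_image:
  assumes "cube_le u p" "cube_le p q" "cube_le q v" "length u = m"
  shows "face_coords u v ` cube_interval m p q =
    cube_interval (face_dim u v) (face_coords u v p) (face_coords u v q)"
proof (intro equalityI subsetI)
  have lengths: "length v = m" "length p = m" "length q = m"
    using assms cube_le_length by metis+
  fix w
  { assume "w \<in> face_coords u v ` cube_interval m p q"
    then show "w \<in> cube_interval (face_dim u v) (face_coords u v p) (face_coords u v q)"
      using assms lengths by (auto simp: cube_interval_def length_face_coords face_coords_mono) }
  { assume w: "w \<in> cube_interval (face_dim u v) (face_coords u v p) (face_coords u v q)"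
    have "face_point u v (face_coords u v p) = p" "face_point u v (face_coords u v q) = q"
      using assms cube_le_trans by (auto intro: face_point_face_coords)
    then have "face_point u v w \<in> cube_interval m p q"
      using w assms lengths face_point_mono[of u v "face_coords u v p" w] face_point_mono[of u v w "face_coords u v q"]
      by (auto simp: cube_interval_def length_face_point)
    moreover have "face_coords u v (face_point u v w) = w"
      using w lengths assms by (simp add: face_coords_face_point cube_interval_def)
    ultimately show "w \<in> face_coords u v ` cube_interval m p q"
      by (metis rev_image_eqI) }
qed

section \<open>Morphisms of the cube categories\<close>

definition cube_map :: "nat \<Rightarrow> nat \<Rightarrow> (bool list \<Rightarrow> bool list) \<Rightarrow> bool" where
  "cube_map a b f \<longleftrightarrow> f \<in> cube a \<rightarrow> cube b \<and> mono_betw (cube a) cube_le cube_le f"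

lemma cube_mapD:
  "cube_map a b f \<Longrightarrow> length x = a \<Longrightarrow> length (f x) = b"
  "cube_map a b f \<Longrightarrow> length x = a \<Longrightarrow> length y = a \<Longrightarrow> cube_le x y \<Longrightarrow> cube_le (f x) (f y)"
  by (auto simp: cube_map_def mono_betw_def Pi_def)

lemma cube_mapI:
  "(\<And>x. length x = a \<Longrightarrow> length (f x) = b) \<Longrightarrow>
   (\<And>x y. length x = a \<Longrightarrow> length y = a \<Longrightarrow> cube_le x y \<Longrightarrow> cube_le (f x) (f y)) \<Longrightarrow>
   cube_map a b f"
  by (auto simp: cube_map_def mono_betw_def Pi_def)

lemma cube_map_comp: "cube_map a b f \<Longrightarrow> cube_map b c g \<Longrightarrow> cube_map a c (g \<circ> f)"
  by (rule cube_mapI) (auto simp: cube_mapD)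

lemma cube_map_cong: "cube_map a b f \<Longrightarrow> \<forall>x\<in>cube a. g x = f x \<Longrightarrow> cube_map a b g"
  by (rule cube_mapI) (auto simp: cube_mapD)

lemma cube_map_prod:
  assumes "cube_map a b f" "cube_map c d g"
  shows "cube_map (a + c) (b + d) (\<lambda>xs. f (take a xs) @ g (drop a xs))"
proof (rule cube_mapI)
  fix x y :: "bool list" assume "length x = a + c" "length y = a + c" "cube_le x y"
  then show "cube_le (f (take a x) @ g (drop a x)) (f (take a y) @ g (drop a y))"
    using assms by (simp add: cube_le_append cube_mapD cube_le_take cube_le_drop)
qed (simp add: cube_mapD(1)[OF assms(1)] cube_mapD(1)[OF assms(2)])

lemma gens_cases:
  "(a, b, g) \<in> gens C \<Longrightarrow>
   (a, b, g) \<in> {(2, 2, tau), (2, 1, gamma_minus), (2, 1, gamma_plus), (1, 2, diag)}"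
  by (cases C) (auto simp: gens_def)

lemma length_2_cases: "length xs = Suc (Suc 0) \<Longrightarrow> \<exists>p q. xs = [p, q]"
  by (auto simp: length_Suc_conv)

lemma length_1_cases: "length xs = Suc 0 \<Longrightarrow> \<exists>p. xs = [p]"
  by (auto simp: length_Suc_conv)

lemma gens_cube_map: "(a, b, g) \<in> gens C \<Longrightarrow> cube_map a b g"
  by (drule gens_cases, intro cube_mapI)
    (auto simp: numeral_2_eq_2 tau_def gamma_minus_def gamma_plus_def diag_def
      dest!: length_2_cases length_1_cases)

lemma dmor_cube_map: "dmor (gens C) a b f \<Longrightarrow> cube_map a b f"
proof (induction rule: dmor.induct)
  case (dm_base a b f)
  then show ?case by (simp add: cube_map_def)
qed (auto intro: gens_cube_map cube_map_comp cube_map_prod cube_map_cong)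

lemma cube_map_interval_image:
  assumes f: "cube_map m n f" and xz: "length x = m" "length z = m" "cube_le x z"
    and uv: "f ` cube_interval m x z = cube_interval n u v"
  shows "u = f x" "v = f z"
proof -
  have ends: "x \<in> cube_interval m x z" "z \<in> cube_interval m x z"
    using xz by (auto simp: cube_interval_def)
  then have "f x \<in> cube_interval n u v" "f z \<in> cube_interval n u v"
    using uv by blast+
  then have below: "cube_le u (f x)" "cube_le (f z) v" and "cube_le (f x) v" "length (f x) = n"
    by (simp_all add: cube_interval_def)
  then have "cube_le u v" "length u = n" "length v = n"
    using cube_le_trans cube_le_length by metis+
  then have "u \<in> f ` cube_interval m x z" "v \<in> f ` cube_interval m x z"
    using uv by (auto simp: cube_interval_def)
  then have "cube_le (f x) u" "cube_le v (f z)"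
    using f xz by (auto simp: cube_interval_def cube_mapD)
  then show "u = f x" "v = f z"
    using below by (simp_all add: cube_le_antisym)
qed

lemma boxplus_mor_iff:
  "boxplus_mor m n f \<longleftrightarrow> cube_map m n f \<and>
     (\<forall>x z. length x = m \<longrightarrow> length z = m \<longrightarrow> cube_le x z \<longrightarrow>
        f ` cube_interval m x z = cube_interval n (f x) (f z))"
  (is "_ \<longleftrightarrow> ?map \<and> ?image")
proof
  assume f: "boxplus_mor m n f"
  then have ?map
    by (simp add: boxplus_mor_def cube_map_def)
  moreover have ?image
  proof (intro allI impI)
    fix x z assume xz: "length x = m" "length z = m" "cube_le x z"
    from f have "\<forall>x\<in>cube m. \<forall>z\<in>cube m. cube_le x z \<longrightarrow>
        (\<exists>u\<in>cube n. \<exists>v\<in>cube n. cube_le u v \<and> f ` cube_interval m x z = cube_interval n u v)"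
      unfolding boxplus_mor_def by (elim conjE)
    then have "\<exists>u\<in>cube n. \<exists>v\<in>cube n. cube_le u v \<and> f ` cube_interval m x z = cube_interval n u v"
      using xz by simp
    then obtain u v where uv: "f ` cube_interval m x z = cube_interval n u v"
      by blast
    show "f ` cube_interval m x z = cube_interval n (f x) (f z)"
      using uv cube_map_interval_image[OF \<open>?map\<close> xz uv] by simp
  qed
  ultimately show "?map \<and> ?image" ..
next
  assume map_image: "?map \<and> ?image"
  then have map: ?map and image: ?image
    by blast+
  have "\<exists>u\<in>cube n. \<exists>v\<in>cube n. cube_le u v \<and> f ` cube_interval m x z = cube_interval n u v"
    if "x \<in> cube m" "z \<in> cube m" "cube_le x z" for x z
  proof -
    have "f x \<in> cube n" "f z \<in> cube n"
      "cube_le (f x) (f z) \<and> f ` cube_interval m x z = cube_interval n (f x) (f z)"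
      using that image by (simp_all add: cube_mapD[OF map])
    then show ?thesis
      by blast
  qed
  then show "boxplus_mor m n f"
    using map_image unfolding boxplus_mor_def cube_map_def by blast
qed

lemma boxplus_mor_cube_map: "boxplus_mor m n f \<Longrightarrow> cube_map m n f"
  by (simp add: boxplus_mor_iff)

lemma boxplus_mor_image:
  "boxplus_mor m n f \<Longrightarrow> length x = m \<Longrightarrow> length z = m \<Longrightarrow> cube_le x z \<Longrightarrow>
   f ` cube_interval m x z = cube_interval n (f x) (f z)"
  by (simp add: boxplus_mor_iff)

lemma boxplus_morI:
  "cube_map m n f \<Longrightarrow>
   (\<And>x z. length x = m \<Longrightarrow> length z = m \<Longrightarrow> cube_le x z \<Longrightarrow>
      f ` cube_interval m x z = cube_interval n (f x) (f z)) \<Longrightarrow>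
   boxplus_mor m n f"
  by (simp add: boxplus_mor_iff)

lemma boxplus_mor_comp:
  assumes f: "boxplus_mor a b f" and g: "boxplus_mor b c g"
  shows "boxplus_mor a c (g \<circ> f)"
proof (rule boxplus_morI)
  have "cube_map a b f"
    using f by (rule boxplus_mor_cube_map)
  then show "cube_map a c (g \<circ> f)"
    using g boxplus_mor_cube_map cube_map_comp by blast
  fix x z assume xz: "length x = a" "length z = a" "cube_le x z"
  have "(g \<circ> f) ` cube_interval a x z = g ` (f ` cube_interval a x z)"
    by (rule image_comp[symmetric])
  also have "\<dots> = g ` cube_interval b (f x) (f z)"
    using f xz by (simp add: boxplus_mor_image)
  also have "\<dots> = cube_interval c (g (f x)) (g (f z))"
    using g xz \<open>cube_map a b f\<close> by (simp add: boxplus_mor_image cube_mapD)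
  finally show "(g \<circ> f) ` cube_interval a x z = cube_interval c ((g \<circ> f) x) ((g \<circ> f) z)"
    by simp
qed

lemma boxplus_mor_cong:
  assumes f: "boxplus_mor a b f" and eq: "\<forall>x\<in>cube a. g x = f x"
  shows "boxplus_mor a b g"
proof (rule boxplus_morI)
  show "cube_map a b g"
    using f eq boxplus_mor_cube_map cube_map_cong by blast
  fix x z assume xz: "length x = a" "length z = a" "cube_le x z"
  have "g ` cube_interval a x z = f ` cube_interval a x z"
    using eq by (intro image_cong) (auto simp: cube_interval_def)
  then show "g ` cube_interval a x z = cube_interval b (g x) (g z)"
    using f eq xz by (simp add: boxplus_mor_image)
qed

lemma boxplus_mor_prod:
  assumes f: "boxplus_mor a b f" and g: "boxplus_mor c d g"
  shows "boxplus_mor (a + c) (b + d) (\<lambda>xs. f (take a xs) @ g (drop a xs))"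
proof (rule boxplus_morI)
  have fg: "cube_map a b f" "cube_map c d g"
    using f g by (simp_all add: boxplus_mor_cube_map)
  then show "cube_map (a + c) (b + d) (\<lambda>xs. f (take a xs) @ g (drop a xs))"
    by (rule cube_map_prod)
  fix x z assume xz: "length x = a + c" "length z = a + c" "cube_le x z"
  let ?I1 = "cube_interval a (take a x) (take a z)" and ?I2 = "cube_interval c (drop a x) (drop a z)"
  have "(\<lambda>xs. f (take a xs) @ g (drop a xs)) ` cube_interval (a + c) x z =
      (\<lambda>(p, q). f p @ g q) ` (?I1 \<times> ?I2)"
    unfolding cube_interval_append[OF xz(1,2)] image_comp
    by (rule image_cong) (auto simp: cube_interval_def)
  also have "\<dots> = (\<lambda>(p, q). p @ q) ` (f ` ?I1 \<times> g ` ?I2)"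
    by force
  also have "\<dots> = cube_interval (b + d) (f (take a x) @ g (drop a x)) (f (take a z) @ g (drop a z))"
    using xz f g fg by (simp add: boxplus_mor_image cube_le_take cube_le_drop cube_interval_append cube_mapD)
  finally show "(\<lambda>xs. f (take a xs) @ g (drop a xs)) ` cube_interval (a + c) x z =
      cube_interval (b + d) (f (take a x) @ g (drop a x)) (f (take a z) @ g (drop a z))" .
qed

lemma boxplus_mor_id: "boxplus_mor a a (\<lambda>xs. xs)"
  by (rule boxplus_morI) (auto intro: cube_mapI)

lemma boxplus_mor_Nil: "boxplus_mor a 0 (\<lambda>xs. [])"
  by (rule boxplus_morI) (auto intro: cube_mapI simp: cube_interval_def)

lemma dmor_id: "dmor G a a (\<lambda>xs. xs)"
proof (induction a)
  case 0
  show ?case by (rule dm_base) (auto simp: mono_betw_def)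
next
  case (Suc a)
  have "dmor G (1 + a) (1 + a) (\<lambda>xs. take 1 xs @ drop 1 xs)"
    by (rule dm_prod[OF _ Suc]) (rule dm_base, auto simp: mono_betw_def)
  then show ?case by simp
qed

lemma dmor_Nil: "dmor G a 0 (\<lambda>xs. [])"
proof (induction a)
  case 0
  show ?case by (rule dm_base) (auto simp: mono_betw_def)
next
  case (Suc a)
  have "dmor G (1 + a) (0 + 0) (\<lambda>xs. [] @ [])"
    by (rule dm_prod[OF _ Suc]) (rule dm_base, auto simp: mono_betw_def)
  then show ?case by simp
qed

lemma sq_mor_cube_map: "sq_mor C a b f \<Longrightarrow> cube_map a b f"
  by (auto simp: sq_mor_def boxplus_mor_cube_map dmor_cube_map split: if_splits)

lemma sq_mor_comp: "sq_mor C a b f \<Longrightarrow> sq_mor C b c g \<Longrightarrow> sq_mor C a c (g \<circ> f)"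
  by (auto simp: sq_mor_def boxplus_mor_comp intro: dm_comp split: if_splits)

lemma sq_mor_cong: "sq_mor C a b f \<Longrightarrow> \<forall>x\<in>cube a. g x = f x \<Longrightarrow> sq_mor C a b g"
  by (auto simp: sq_mor_def intro: boxplus_mor_cong dm_ext split: if_splits)

lemma sq_mor_prod:
  "sq_mor C a b f \<Longrightarrow> sq_mor C c d g \<Longrightarrow>
   sq_mor C (a + c) (b + d) (\<lambda>xs. f (take a xs) @ g (drop a xs))"
  by (auto simp: sq_mor_def intro: boxplus_mor_prod dm_prod split: if_splits)

lemma sq_mor_id: "sq_mor C a a (\<lambda>xs. xs)"
  by (simp add: sq_mor_def boxplus_mor_id dmor_id)

lemma sq_mor_Nil: "sq_mor C a 0 (\<lambda>xs. [])"
  by (simp add: sq_mor_def boxplus_mor_Nil dmor_Nil)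

section \<open>Restriction of box-morphisms to faces\<close>

definition face_restrict :: "(bool list \<Rightarrow> bool list) \<Rightarrow> bool list \<Rightarrow> bool list \<Rightarrow> bool list \<Rightarrow> bool list" where
  "face_restrict f u v w = face_coords (f u) (f v) (f (face_point u v w))"

lemma cube_map_face_restrict:
  assumes f: "cube_map m n f" and uv: "length u = m" "cube_le u v"
  shows "cube_map (face_dim u v) (face_dim (f u) (f v)) (face_restrict f u v)"
proof -
  have "length v = m"
    using uv cube_le_length by metis
  then show ?thesis
    using f uv
    by (intro cube_mapI)
      (simp_all add: face_restrict_def length_face_coords length_face_point cube_mapD face_point_mono
        face_coords_mono)
qed

lemma boxplus_mor_face_restrict:
  assumes f: "boxplus_mor m n f" and uv: "length u = m" "cube_le u v"
  shows "boxplus_mor (face_dim u v) (face_dim (f u) (f v)) (face_restrict f u v)"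
proof (rule boxplus_morI)
  have fm: "cube_map m n f"
    using f by (rule boxplus_mor_cube_map)
  then show "cube_map (face_dim u v) (face_dim (f u) (f v)) (face_restrict f u v)"
    using uv by (rule cube_map_face_restrict)
  fix w1 w2 assume w: "length w1 = face_dim u v" "length w2 = face_dim u v" "cube_le w1 w2"
  have lv: "length v = m"
    using uv cube_le_length by metis
  let ?p1 = "face_point u v w1" and ?p2 = "face_point u v w2"
  have p: "length ?p1 = m" "length ?p2 = m" "cube_le ?p1 ?p2"
    using uv w lv by (simp_all add: length_face_point face_point_mono)
  have "cube_le u ?p1" "cube_le ?p2 v"
    using face_point_between[OF uv(2)] by blast+
  then have fp: "cube_le (f u) (f ?p1)" "cube_le (f ?p1) (f ?p2)" "cube_le (f ?p2) (f v)"
    using fm uv lv p by (simp_all add: cube_mapD)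
  have "face_restrict f u v ` cube_interval (face_dim u v) w1 w2 =
      face_coords (f u) (f v) ` f ` face_point u v ` cube_interval (face_dim u v) w1 w2"
    by (auto simp: face_restrict_def image_comp)
  also have "\<dots> = face_coords (f u) (f v) ` cube_interval n (f ?p1) (f ?p2)"
    using uv w p f by (simp add: face_point_image boxplus_mor_image)
  also have "\<dots> = cube_interval (face_dim (f u) (f v)) (face_restrict f u v w1) (face_restrict f u v w2)"
    using fp fm uv by (simp add: face_coords_image face_restrict_def cube_mapD)
  finally show "face_restrict f u v ` cube_interval (face_dim u v) w1 w2 =
      cube_interval (face_dim (f u) (f v)) (face_restrict f u v w1) (face_restrict f u v w2)" .
qed

lemma face_restrict_comp:
  assumes f: "cube_map a b f" and uv: "length u = a" "cube_le u v" and w: "length w = face_dim u v"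
  shows "face_restrict (g \<circ> f) u v w = (face_restrict g (f u) (f v) \<circ> face_restrict f u v) w"
proof -
  have "length v = a"
    using uv cube_le_length by metis
  then have "cube_le (f u) (f (face_point u v w))" "cube_le (f (face_point u v w)) (f v)"
    using face_point_between[OF uv(2)] f uv by (simp_all add: cube_mapD length_face_point)
  then show ?thesis
    by (simp add: face_restrict_def face_point_face_coords)
qed

lemma face_restrict_prod:
  assumes f: "cube_map a b f" and u: "length u1 = a" "length v1 = a"
  shows "face_restrict (\<lambda>xs. f (take a xs) @ g (drop a xs)) (u1 @ u2) (v1 @ v2) w =
    face_restrict f u1 v1 (take (face_dim u1 v1) w) @ face_restrict g u2 v2 (drop (face_dim u1 v1) w)"
proof -
  let ?w1 = "take (face_dim u1 v1) w" and ?w2 = "drop (face_dim u1 v1) w"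
  have "length (face_point u1 v1 ?w1) = a"
    using u by (simp add: length_face_point)
  then show ?thesis
    using u f by (simp add: face_restrict_def face_point_append face_coords_append cube_mapD)
qed

lemma face_restrict_full:
  assumes f: "cube_map a b f"
    and bot: "f (replicate a False) = replicate b False" and top: "f (replicate a True) = replicate b True"
    and w: "length w = a"
  shows "face_restrict f (replicate a False) (replicate a True) w = f w"
  using assms by (simp add: face_restrict_def face_point_full face_coords_full cube_mapD)

lemma dmor_if_dims_le_1: "cube_map a b f \<Longrightarrow> a \<le> 1 \<Longrightarrow> b \<le> 1 \<Longrightarrow> dmor G a b f"
  by (rule dm_base) (auto simp: cube_map_def)

lemma gens_bot_top:
  "(a, b, g) \<in> gens C \<Longrightarrow>
   g (replicate a False) = replicate b False \<and> g (replicate a True) = replicate b True"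
  by (drule gens_cases)
    (auto simp: numeral_2_eq_2 tau_def gamma_minus_def gamma_plus_def diag_def)

text \<open>On a proper face the generators are maps between cubes of dimension at most 1, which are
  morphisms by \<open>dm_base\<close>.\<close>

lemma gens_face_dims:
  assumes "(a, b, g) \<in> gens C" "length u = a" "cube_le u v"
  shows "(face_dim u v \<le> 1 \<and> face_dim (g u) (g v) \<le> 1) \<or>
    (u = replicate a False \<and> v = replicate a True)"
proof -
  have "length v = a"
    using assms cube_le_length by metis
  then show ?thesis
    using gens_cases[OF assms(1)] assms(2,3)
    by (auto simp: numeral_2_eq_2 tau_def gamma_minus_def gamma_plus_def diag_def
        split: if_splits dest!: length_2_cases length_1_cases)
qed

lemma dmor_face_restrict_gen:
  assumes g: "(a, b, g) \<in> gens C" and uv: "length u = a" "cube_le u v"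
  shows "dmor (gens C) (face_dim u v) (face_dim (g u) (g v)) (face_restrict g u v)"
proof -
  have g_map: "cube_map a b g"
    using g by (rule gens_cube_map)
  from gens_face_dims[OF g uv] show ?thesis
  proof
    assume "face_dim u v \<le> 1 \<and> face_dim (g u) (g v) \<le> 1"
    then show ?thesis
      using cube_map_face_restrict[OF g_map uv] by (blast intro: dmor_if_dims_le_1)
  next
    assume full: "u = replicate a False \<and> v = replicate a True"
    have "dmor (gens C) a b (face_restrict g u v)"
      using full gens_bot_top[OF g] g_map
      by (intro dm_ext[OF dm_gen[OF g]]) (simp add: face_restrict_full)
    then show ?thesis
      using full gens_bot_top[OF g] by (simp add: face_dim_full)
  qed
qed

lemma dmor_face_restrict:
  "dmor (gens C) a b f \<Longrightarrow> length u = a \<Longrightarrow> cube_le u v \<Longrightarrow>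
   dmor (gens C) (face_dim u v) (face_dim (f u) (f v)) (face_restrict f u v)"
proof (induction arbitrary: u v rule: dmor.induct)
  case (dm_base a b f)
  then have "cube_map a b f" "length v = a"
    using cube_le_length by (metis cube_map_def)+
  then show ?case
    using dm_base cube_map_face_restrict face_dim_le_length[of u v] face_dim_le_length[of "f u" "f v"]
    by (intro dmor_if_dims_le_1) (auto simp: cube_mapD)
next
  case (dm_gen a b g)
  then show ?case
    by (rule dmor_face_restrict_gen)
next
  case (dm_comp a b f c g)
  have f: "cube_map a b f"
    using dm_comp.hyps(1) by (rule dmor_cube_map)
  have "length v = a"
    using dm_comp.prems cube_le_length by metis
  then have fu: "length (f u) = b" "cube_le (f u) (f v)"
    using f dm_comp.prems by (simp_all add: cube_mapD)
  have "dmor (gens C) (face_dim u v) (face_dim (g (f u)) (g (f v)))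
      (face_restrict g (f u) (f v) \<circ> face_restrict f u v)"
    using dm_comp.IH(1)[OF dm_comp.prems] dm_comp.IH(2)[OF fu] by (rule dmor.dm_comp)
  moreover have "\<forall>w\<in>cube (face_dim u v).
      face_restrict (g \<circ> f) u v w = (face_restrict g (f u) (f v) \<circ> face_restrict f u v) w"
    using face_restrict_comp[OF f dm_comp.prems] by simp
  ultimately have "dmor (gens C) (face_dim u v) (face_dim (g (f u)) (g (f v))) (face_restrict (g \<circ> f) u v)"
    by (rule dmor.dm_ext)
  then show ?case
    by (simp add: comp_def)
next
  case (dm_prod a b f c d g)
  have f: "cube_map a b f"
    using dm_prod.hyps(1) by (rule dmor_cube_map)
  have "length v = a + c"
    using dm_prod.prems cube_le_length by metis
  then have uv: "u = take a u @ drop a u" "v = take a v @ drop a v"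
    "length (take a u) = a" "length (take a v) = a" "length (drop a u) = c"
    "cube_le (take a u) (take a v)" "cube_le (drop a u) (drop a v)"
    using dm_prod.prems by (simp_all add: cube_le_take cube_le_drop)
  then have "face_dim u v = face_dim (take a u) (take a v) + face_dim (drop a u) (drop a v)"
    "face_dim (f (take a u) @ g (drop a u)) (f (take a v) @ g (drop a v)) =
      face_dim (f (take a u)) (f (take a v)) + face_dim (g (drop a u)) (g (drop a v))"
    using f by (metis face_dim_append, simp add: face_dim_append cube_mapD)
  moreover have "dmor (gens C) (face_dim (take a u) (take a v) + face_dim (drop a u) (drop a v))
      (face_dim (f (take a u)) (f (take a v)) + face_dim (g (drop a u)) (g (drop a v)))
      (\<lambda>w. face_restrict f (take a u) (take a v) (take (face_dim (take a u) (take a v)) w) @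
        face_restrict g (drop a u) (drop a v) (drop (face_dim (take a u) (take a v)) w))"
    using uv by (intro dmor.dm_prod dm_prod.IH) simp_all
  ultimately show ?case
    using face_restrict_prod[OF f uv(3,4), of g "drop a u" "drop a v"] uv(1,2)
    by (auto intro: dm_ext)
next
  case (dm_ext a b f g)
  then have "g u = f u" "g v = f v" "\<forall>w\<in>cube (face_dim u v). face_restrict g u v w = face_restrict f u v w"
    using cube_le_length[OF dm_ext.prems(2)] by (auto simp: face_restrict_def length_face_point)
  then show ?case
    using dm_ext.IH[OF dm_ext.prems] by (auto intro: dmor.dm_ext)
qed

lemma sq_mor_face_restrict:
  "sq_mor C m n f \<Longrightarrow> length u = m \<Longrightarrow> cube_le u v \<Longrightarrow>
   sq_mor C (face_dim u v) (face_dim (f u) (f v)) (face_restrict f u v)"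
  by (auto simp: sq_mor_def boxplus_mor_face_restrict dmor_face_restrict split: if_splits)

section \<open>Isomorphisms of cubes\<close>

definition permute_coords :: "nat \<Rightarrow> (nat \<Rightarrow> nat) \<Rightarrow> bool list \<Rightarrow> bool list" where
  "permute_coords K \<rho> xs = map (\<lambda>q. xs ! \<rho> q) [0..<K]"

lemma permute_coords_comp:
  "\<forall>q<K. \<rho> q < K \<Longrightarrow> permute_coords K \<rho> (permute_coords K \<pi> xs) = permute_coords K (\<pi> \<circ> \<rho>) xs"
  by (auto simp: permute_coords_def)

lemma dmor_permute_coords_comp:
  assumes "dmor G K K (permute_coords K \<pi>)" "dmor G K K (permute_coords K \<rho>)" "\<forall>q<K. \<rho> q < K"
  shows "dmor G K K (permute_coords K (\<pi> \<circ> \<rho>))"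
proof (rule dm_ext)
  show "dmor G K K (permute_coords K \<rho> \<circ> permute_coords K \<pi>)"
    using assms(1,2) by (rule dm_comp)
  show "\<forall>xs\<in>cube K. permute_coords K (\<pi> \<circ> \<rho>) xs = (permute_coords K \<rho> \<circ> permute_coords K \<pi>) xs"
    using assms(3) by (simp add: permute_coords_comp)
qed

lemma dmor_swap_adjacent:
  assumes tau: "(2, 2, tau) \<in> G" and a: "Suc a < K"
  shows "dmor G K K (permute_coords K (Transposition.transpose a (Suc a)))"
proof (rule dm_ext)
  have K: "a + (2 + (K - Suc (Suc a))) = K"
    using a by simp
  have "dmor G (a + (2 + (K - Suc (Suc a)))) (a + (2 + (K - Suc (Suc a))))
      (\<lambda>xs. take a xs @ tau (take 2 (drop a xs)) @ drop 2 (drop a xs))"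
    using dm_prod[OF dmor_id[of G a] dm_prod[OF dm_gen[OF tau] dmor_id[of G "K - Suc (Suc a)"]]]
    by simp
  then show "dmor G K K (\<lambda>xs. take a xs @ tau (take 2 (drop a xs)) @ drop 2 (drop a xs))"
    unfolding K .
  show "\<forall>xs\<in>cube K. permute_coords K (Transposition.transpose a (Suc a)) xs =
      take a xs @ tau (take 2 (drop a xs)) @ drop 2 (drop a xs)"
  proof
    fix xs assume "xs \<in> cube K"
    then have drop_a: "drop a xs = xs ! a # xs ! Suc a # drop (Suc (Suc a)) xs"
      using a by (simp add: Cons_nth_drop_Suc)
    then have xs: "xs = take a xs @ xs ! a # xs ! Suc a # drop (Suc (Suc a)) xs"
      by (metis append_take_drop_id)
    have "length (take a xs) = a"
      using a \<open>xs \<in> cube K\<close> by simp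
    then have "permute_coords K (Transposition.transpose a (Suc a)) xs =
        take a xs @ xs ! Suc a # xs ! a # drop (Suc (Suc a)) xs"
      using a \<open>xs \<in> cube K\<close>
      by (subst (1) xs)
        (auto simp: permute_coords_def transpose_def nth_append nth_Cons' intro!: nth_equalityI)
    also have "\<dots> = take a xs @ tau (take 2 (drop a xs)) @ drop 2 (drop a xs)"
      by (simp add: drop_a tau_def)
    finally show "permute_coords K (Transposition.transpose a (Suc a)) xs =
        take a xs @ tau (take 2 (drop a xs)) @ drop 2 (drop a xs)" .
  qed
qed

lemma dmor_transpose:
  assumes tau: "(2, 2, tau) \<in> G" and "a < b" "b < K"
  shows "dmor G K K (permute_coords K (Transposition.transpose a b))"
  using assms(2,3)
proof (induction b)
  case (Suc b)
  show ?case
  proof (cases "a = b")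
    case True
    then show ?thesis
      using dmor_swap_adjacent[OF tau] Suc.prems by simp
  next
    case False
    let ?s = "Transposition.transpose b (Suc b)"
    have "a < b"
      using False Suc.prems by simp
    then have "Transposition.transpose a (Suc b) = ?s \<circ> (Transposition.transpose a b \<circ> ?s)"
      by (auto simp: transpose_def fun_eq_iff)
    moreover have "dmor G K K (permute_coords K ?s)"
      using dmor_swap_adjacent[OF tau] Suc.prems by simp
    moreover have "\<forall>q<K. ?s q < K" "\<forall>q<K. (Transposition.transpose a b \<circ> ?s) q < K"
      using Suc.prems \<open>a < b\<close> by (auto simp: transpose_def)
    ultimately show ?thesis
      using Suc \<open>a < b\<close> by (metis Suc_lessD dmor_permute_coords_comp)
  qed
qed simp

lemma dmor_permute_coords:
  assumes tau: "(2, 2, tau) \<in> G" and \<rho>: "\<rho> permutes {..<K}"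
  shows "dmor G K K (permute_coords K \<rho>)"
  using \<rho> finite_lessThan
proof (induction rule: permutes_induct)
  case id
  show ?case
    using dmor_id by (rule dm_ext) (auto simp: permute_coords_def intro: nth_equalityI)
next
  case (swap a b \<rho>)
  have "dmor G K K (permute_coords K (Transposition.transpose a b))"
    using dmor_transpose[OF tau, of a b K] dmor_transpose[OF tau, of b a K] swap.hyps
    by (cases a b rule: linorder_cases) (auto simp: transpose_commute)
  moreover have "\<forall>q<K. \<rho> q < K"
    using swap.hyps(4) permutes_in_image[of \<rho> "{..<K}"] by simp
  ultimately show ?case
    using swap.IH dmor_permute_coords_comp by blast
qed

definition cube_iso :: "'a set \<Rightarrow> ('a \<Rightarrow> 'a \<Rightarrow> bool) \<Rightarrow> nat \<Rightarrow> ('a \<Rightarrow> bool list) \<Rightarrow> bool" where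
  "cube_iso J le K \<iota> \<longleftrightarrow> bij_betw \<iota> J (cube K) \<and> (\<forall>a\<in>J. \<forall>b\<in>J. le a b \<longleftrightarrow> cube_le (\<iota> a) (\<iota> b))"

lemma cube_iso_inv_into:
  assumes "cube_iso J le K \<iota>" "y \<in> cube K"
  shows "inv_into J \<iota> y \<in> J" "\<iota> (inv_into J \<iota> y) = y"
  using assms unfolding cube_iso_def
  by (metis bij_betw_apply bij_betw_inv_into, metis bij_betw_inv_into_right)

lemma cube_iso_apply: "cube_iso J le K \<iota> \<Longrightarrow> a \<in> J \<Longrightarrow> \<iota> a \<in> cube K"
  unfolding cube_iso_def by (metis bij_betw_apply)

lemma cube_iso_comp_order_iso:
  assumes h: "bij_betw h J J'" "\<forall>a\<in>J. \<forall>b\<in>J. le a b \<longleftrightarrow> le' (h a) (h b)"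
    and g: "cube_iso J' le' K g"
  shows "cube_iso J le K (g \<circ> h)"
  using assms unfolding cube_iso_def by (auto simp: bij_betw_trans bij_betw_apply)

lemma cube_iso_comp_inv:
  assumes \<iota>: "cube_iso J le K \<iota>" and \<kappa>: "cube_iso J le K' \<kappa>"
  shows "cube_iso (cube K) cube_le K' (\<kappa> \<circ> inv_into J \<iota>)"
proof -
  have inv: "bij_betw (inv_into J \<iota>) (cube K) J"
    using \<iota> by (simp add: cube_iso_def bij_betw_inv_into)
  have "cube_le a b \<longleftrightarrow> cube_le (\<kappa> (inv_into J \<iota> a)) (\<kappa> (inv_into J \<iota> b))"
    if "a \<in> cube K" "b \<in> cube K" for a b
  proof -
    have "inv_into J \<iota> a \<in> J" "inv_into J \<iota> b \<in> J"
      using inv that by (simp_all add: bij_betw_apply)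
    moreover have "\<iota> (inv_into J \<iota> a) = a" "\<iota> (inv_into J \<iota> b) = b"
      using \<iota> that unfolding cube_iso_def by (metis bij_betw_inv_into_right)+
    ultimately show ?thesis
      using \<iota> \<kappa> unfolding cube_iso_def by metis
  qed
  then show ?thesis
    using inv \<kappa> by (simp add: cube_iso_def bij_betw_trans)
qed

lemma cube_iso_id: "cube_iso (cube K) cube_le K (\<lambda>x. x)"
  by (simp add: cube_iso_def bij_betw_def)

lemma cube_iso_inv:
  "cube_iso (cube K) cube_le K' \<sigma> \<Longrightarrow> cube_iso (cube K') cube_le K (inv_into (cube K) \<sigma>)"
  using cube_iso_comp_inv[OF _ cube_iso_id] by (simp add: comp_def)

definition unit_vec :: "nat \<Rightarrow> nat \<Rightarrow> bool list" where
  "unit_vec K q = map (\<lambda>p. p = q) [0..<K]"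

lemma length_unit_vec [simp]: "length (unit_vec K q) = K"
  by (simp add: unit_vec_def)

lemma unit_vec_cube_le_iff: "length y = K \<Longrightarrow> q < K \<Longrightarrow> cube_le (unit_vec K q) y \<longleftrightarrow> y ! q"
  by (auto simp: cube_le_iff_nth unit_vec_def)

lemma unit_vec_neq_bot: "q < K \<Longrightarrow> unit_vec K q \<noteq> replicate K False"
  by (auto simp: unit_vec_def dest: arg_cong[of _ _ "\<lambda>xs. xs ! q"])

lemma unit_vec_inj: "q < K \<Longrightarrow> unit_vec K q = unit_vec K q' \<Longrightarrow> q = q'"
  by (auto simp: unit_vec_def dest: arg_cong[of _ _ "\<lambda>xs. xs ! q"])

lemma cube_le_bot_iff: "cube_le y (replicate K False) \<longleftrightarrow> y = replicate K False"
  by (auto simp: cube_le_iff_nth intro: nth_equalityI)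

lemma bot_cube_le: "length y = K \<Longrightarrow> cube_le (replicate K False) y"
  by (simp add: cube_le_iff_nth)

lemma cube_le_unit_vec_cases:
  assumes "cube_le y (unit_vec K q)"
  shows "y = replicate K False \<or> y = unit_vec K q"
proof -
  have y: "length y = K" "\<And>j. j < K \<Longrightarrow> y ! j \<Longrightarrow> j = q"
    using assms by (auto simp: cube_le_iff_nth unit_vec_def)
  show ?thesis
  proof (cases "q < K \<and> y ! q")
    case True
    have "y = unit_vec K q"
    proof (rule nth_equalityI)
      fix j assume "j < length y"
      then show "y ! j = unit_vec K q ! j"
        using y True by (auto simp: unit_vec_def)
    qed (simp add: y)
    then show ?thesis ..
  next
    case False
    have "y = replicate K False"
    proof (rule nth_equalityI)
      fix j assume "j < length y"
      then show "y ! j = replicate K False ! j"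
        using y False by auto
    qed (simp add: y)
    then show ?thesis ..
  qed
qed

lemma atom_eq_unit_vec:
  assumes a: "length a = K" "a \<noteq> replicate K False"
    and atom: "\<And>y. length y = K \<Longrightarrow> cube_le y a \<Longrightarrow> y = replicate K False \<or> y = a"
  shows "\<exists>p<K. a = unit_vec K p"
proof -
  have "\<exists>p<K. a ! p"
  proof (rule ccontr)
    assume "\<not> (\<exists>p<K. a ! p)"
    then have "a = replicate K False"
      using a(1) by (auto intro: nth_equalityI)
    with a(2) show False ..
  qed
  then obtain p where p: "p < K" "a ! p"
    by blast
  then have "cube_le (unit_vec K p) a"
    using a unit_vec_cube_le_iff by blast
  then show ?thesis
    using atom[of "unit_vec K p"] unit_vec_neq_bot p by auto
qed

lemma cube_iso_bot:
  assumes \<sigma>: "cube_iso (cube K) cube_le K \<sigma>"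
  shows "\<sigma> (replicate K False) = replicate K False"
proof -
  let ?bot = "replicate K False"
  let ?y = "inv_into (cube K) \<sigma> ?bot"
  have y: "?y \<in> cube K" "\<sigma> ?y = ?bot"
    using cube_iso_inv_into[OF \<sigma>] by simp_all
  then have "cube_le ?bot ?y"
    by (simp add: bot_cube_le)
  then have "cube_le (\<sigma> ?bot) ?bot"
    using \<sigma> y by (simp add: cube_iso_def)
  then show ?thesis
    by (simp add: cube_le_bot_iff)
qed

lemma cube_iso_unit_vec:
  assumes \<sigma>: "cube_iso (cube K) cube_le K \<sigma>" and q: "q < K"
  shows "\<exists>p<K. \<sigma> (unit_vec K q) = unit_vec K p"
proof (rule atom_eq_unit_vec)
  have bij: "bij_betw \<sigma> (cube K) (cube K)" and ord: "\<forall>a\<in>cube K. \<forall>b\<in>cube K. cube_le a b \<longleftrightarrow> cube_le (\<sigma> a) (\<sigma> b)"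
    using \<sigma> by (simp_all add: cube_iso_def)
  show "length (\<sigma> (unit_vec K q)) = K"
    using cube_iso_apply[OF \<sigma>, of "unit_vec K q"] by simp
  have "inj_on \<sigma> (cube K)"
    using bij by (simp add: bij_betw_def)
  then show "\<sigma> (unit_vec K q) \<noteq> replicate K False"
    using cube_iso_bot[OF \<sigma>] unit_vec_neq_bot[OF q] by (metis in_cube inj_onD length_replicate length_unit_vec)
  fix y assume y: "length y = K" "cube_le y (\<sigma> (unit_vec K q))"
  let ?y = "inv_into (cube K) \<sigma> y"
  have "?y \<in> cube K" "\<sigma> ?y = y"
    using cube_iso_inv_into[OF \<sigma>] y by simp_all
  then have "?y = replicate K False \<or> ?y = unit_vec K q"
    using ord y by (simp add: cube_le_unit_vec_cases)
  then show "y = replicate K False \<or> y = \<sigma> (unit_vec K q)"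
    using \<open>\<sigma> ?y = y\<close> cube_iso_bot[OF \<sigma>] by auto
qed

lemma card_cube: "card (cube K) = 2 ^ K"
proof -
  have "cube K = {xs. set xs \<subseteq> UNIV \<and> length xs = K}"
    by (auto simp: cube_def)
  then show ?thesis
    using card_lists_length_eq[of "UNIV :: bool set" K] by simp
qed

lemma cube_iso_dim: "cube_iso (cube K) cube_le K' \<sigma> \<Longrightarrow> K' = K"
  using bij_betw_same_card[of \<sigma> "cube K" "cube K'"] by (simp add: cube_iso_def card_cube)

lemma cube_iso_nth:
  assumes \<sigma>: "cube_iso (cube K) cube_le K \<sigma>" and y: "y \<in> cube K" and "q < K" "p < K"
    and \<sigma>_p: "inv_into (cube K) \<sigma> (unit_vec K q) = unit_vec K p"
  shows "\<sigma> y ! q \<longleftrightarrow> y ! p"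
proof -
  have "\<sigma> y ! q \<longleftrightarrow> cube_le (unit_vec K q) (\<sigma> y)"
    using cube_iso_apply[OF \<sigma> y] \<open>q < K\<close> by (simp add: unit_vec_cube_le_iff)
  also have "\<dots> \<longleftrightarrow> cube_le (\<sigma> (unit_vec K p)) (\<sigma> y)"
    using cube_iso_inv_into(2)[OF \<sigma>, of "unit_vec K q"] \<sigma>_p by simp
  also have "\<dots> \<longleftrightarrow> cube_le (unit_vec K p) y"
    using \<sigma> y by (simp add: cube_iso_def)
  also have "\<dots> \<longleftrightarrow> y ! p"
    using y \<open>p < K\<close> by (simp add: unit_vec_cube_le_iff)
  finally show ?thesis .
qed

text \<open>The permutation is read off from the preimages of the unit vectors.\<close>

lemma cube_iso_permute_coords:
  assumes \<sigma>: "cube_iso (cube K) cube_le K \<sigma>"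
  obtains \<rho> where "\<rho> permutes {..<K}" "\<forall>y\<in>cube K. \<sigma> y = permute_coords K \<rho> y"
proof -
  let ?\<tau> = "inv_into (cube K) \<sigma>"
  obtain \<rho>0 where \<rho>0: "\<forall>q<K. \<rho>0 q < K \<and> ?\<tau> (unit_vec K q) = unit_vec K (\<rho>0 q)"
    using cube_iso_unit_vec[OF cube_iso_inv[OF \<sigma>]] by metis
  define \<rho> where "\<rho> q = (if q < K then \<rho>0 q else q)" for q
  have \<rho>: "\<rho> q < K" "?\<tau> (unit_vec K q) = unit_vec K (\<rho> q)" if "q < K" for q
    using \<rho>0 that by (simp_all add: \<rho>_def)
  have "\<sigma> y = permute_coords K \<rho> y" if y: "y \<in> cube K" for y
    using cube_iso_apply[OF \<sigma> y] cube_iso_nth[OF \<sigma> y _ \<rho>(1) \<rho>(2)]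
    by (intro nth_equalityI) (simp_all add: permute_coords_def)
  moreover have "inj_on \<rho> {..<K}"
  proof (rule inj_onI)
    fix q q' assume "q \<in> {..<K}" "q' \<in> {..<K}" "\<rho> q = \<rho> q'"
    then have "\<sigma> (?\<tau> (unit_vec K q)) = \<sigma> (?\<tau> (unit_vec K q'))"
      using \<rho> by simp
    then show "q = q'"
      using cube_iso_inv_into(2)[OF \<sigma>] unit_vec_inj \<open>q \<in> {..<K}\<close> by simp
  qed
  then have "\<rho> permutes {..<K}"
    using \<rho>(1) by (intro inj_imp_permutes) (simp_all add: \<rho>_def)
  ultimately show ?thesis
    using that by blast
qed

lemma boxplus_mor_cube_iso:
  assumes \<sigma>: "cube_iso (cube K) cube_le K' \<sigma>"
  shows "boxplus_mor K K' \<sigma>"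
proof (rule boxplus_morI)
  have ord: "\<forall>a\<in>cube K. \<forall>b\<in>cube K. cube_le a b \<longleftrightarrow> cube_le (\<sigma> a) (\<sigma> b)"
    using \<sigma> by (simp add: cube_iso_def)
  show map: "cube_map K K' \<sigma>"
    using ord cube_iso_apply[OF \<sigma>] by (intro cube_mapI) auto
  fix x z assume xz: "length x = K" "length z = K" "cube_le x z"
  show "\<sigma> ` cube_interval K x z = cube_interval K' (\<sigma> x) (\<sigma> z)"
  proof (intro equalityI subsetI)
    fix y assume "y \<in> \<sigma> ` cube_interval K x z"
    then show "y \<in> cube_interval K' (\<sigma> x) (\<sigma> z)"
      using xz ord map by (auto simp: cube_interval_def cube_mapD)
  next
    fix y assume y: "y \<in> cube_interval K' (\<sigma> x) (\<sigma> z)"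
    let ?y = "inv_into (cube K) \<sigma> y"
    have "?y \<in> cube K" "\<sigma> ?y = y"
      using cube_iso_inv_into[OF \<sigma>] y by (simp_all add: cube_interval_def)
    then show "y \<in> \<sigma> ` cube_interval K x z"
      using ord xz y by (auto simp: cube_interval_def intro: rev_image_eqI)
  qed
qed

lemma sq_mor_cube_iso:
  assumes \<sigma>: "cube_iso (cube K) cube_le K' \<sigma>"
  shows "sq_mor C K K' \<sigma>"
proof (cases "C = Boxplus")
  case True
  then show ?thesis
    using boxplus_mor_cube_iso[OF \<sigma>] by (simp add: sq_mor_def)
next
  case False
  then have "(2, 2, tau) \<in> gens C"
    by (cases C) (auto simp: gens_def)
  moreover have K': "K' = K"
    using \<sigma> by (rule cube_iso_dim)
  moreover obtain \<rho> where "\<rho> permutes {..<K}" "\<forall>y\<in>cube K. \<sigma> y = permute_coords K \<rho> y"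
    using \<sigma> K' cube_iso_permute_coords by blast
  ultimately have "dmor (gens C) K K' \<sigma>"
    using dmor_permute_coords dm_ext by metis
  then show ?thesis
    using False by (simp add: sq_mor_def)
qed

section \<open>Chains of cube elements as points of a bigger cube\<close>

lemma length_concat_blocks:
  "\<forall>i<r. length (g i) = m \<Longrightarrow> length (concat (map g [0..<r])) = r * m"
  by (induction r) auto

lemma block_concat_blocks:
  assumes "\<forall>i<r. length (g i) = m" "i < r"
  shows "take m (drop (i * m) (concat (map g [0..<r]))) = g i"
  using assms
proof (induction r)
  case (Suc r)
  have r: "length (concat (map g [0..<r])) = r * m"
    using Suc.prems by (simp add: length_concat_blocks)
  show ?case
  proof (cases "i < r")
    case True
    then have "i * m + m \<le> r * m"
      by (metis add.commute mult_Suc mult_le_mono1 Suc_leI)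
    then have "take m (drop (i * m) (concat (map g [0..<r]) @ g r)) =
        take m (drop (i * m) (concat (map g [0..<r])))"
      using r by simp
    then show ?thesis
      using Suc True by simp
  next
    case False
    then have "i = r"
      using Suc.prems by simp
    then show ?thesis
      using r Suc.prems by simp
  qed
qed simp

lemma concat_blocks_take: "concat (map (\<lambda>i. take m (drop (i * m) l)) [0..<r]) = take (r * m) l"
proof (induction r)
  case (Suc r)
  have "Suc r * m = r * m + m"
    by simp
  then have "take (Suc r * m) l = take (r * m) l @ take m (drop (r * m) l)"
    by (simp only: take_add)
  then show ?case
    using Suc.IH by simp
qed simp

lemma cube_le_concat_blocks:
  "\<forall>i<r. length (g i) = m \<and> length (h i) = m \<Longrightarrow>
   cube_le (concat (map g [0..<r])) (concat (map h [0..<r])) \<longleftrightarrow> (\<forall>i<r. cube_le (g i) (h i))"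
proof (induction r)
  case (Suc r)
  then have "length (concat (map g [0..<r])) = length (concat (map h [0..<r]))"
    using length_concat_blocks[of r g m] length_concat_blocks[of r h m] by simp
  then show ?case
    using Suc by (auto simp: cube_le_append less_Suc_eq)
qed simp

abbreviation cube_chains :: "nat \<Rightarrow> nat \<Rightarrow> (nat \<Rightarrow> bool list) set" where
  "cube_chains k m \<equiv> chains k (cube m) cube_le"

abbreviation chain_interval :: "nat \<Rightarrow> nat \<Rightarrow> (nat \<Rightarrow> bool list) \<Rightarrow> (nat \<Rightarrow> bool list) \<Rightarrow> (nat \<Rightarrow> bool list) set" where
  "chain_interval k m x z \<equiv> interval (cube_chains k m) (chain_le k cube_le) x z"

lemma cube_chains_iff:
  "c \<in> cube_chains k m \<longleftrightarrow>
     c \<in> extensional {..k} \<and> (\<forall>i\<le>k. length (c i) = m) \<and> (\<forall>i j. i \<le> j \<and> j \<le> k \<longrightarrow> cube_le (c i) (c j))"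
  by (auto simp: chains_def PiE_iff)

lemma cube_chainsD:
  "c \<in> cube_chains k m \<Longrightarrow> i \<le> k \<Longrightarrow> length (c i) = m"
  "c \<in> cube_chains k m \<Longrightarrow> i \<le> j \<Longrightarrow> j \<le> k \<Longrightarrow> cube_le (c i) (c j)"
  by (auto simp: cube_chains_iff)

lemma cube_chainsI:
  assumes "c \<in> extensional {..k}" "\<forall>i\<le>k. length (c i) = m" "\<forall>i<k. cube_le (c i) (c (Suc i))"
  shows "c \<in> cube_chains k m"
proof -
  have "cube_le (c i) (c j)" if "i \<le> j" "j \<le> k" for i j
    using that
  proof (induction j)
    case (Suc j)
    then show ?case
      using assms(3) by (cases "i = Suc j") (auto intro: cube_le_trans)
  qed simp
  then show ?thesis
    using assms(1,2) by (simp add: cube_chains_iff)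
qed

definition chain_concat :: "nat \<Rightarrow> (nat \<Rightarrow> bool list) \<Rightarrow> bool list" where
  "chain_concat k c = concat (map c [0..<Suc k])"

definition chain_split :: "nat \<Rightarrow> nat \<Rightarrow> bool list \<Rightarrow> (nat \<Rightarrow> bool list)" where
  "chain_split k m l = restrict (\<lambda>i. take m (drop (i * m) l)) {..k}"

lemma length_chain_concat: "c \<in> cube_chains k m \<Longrightarrow> length (chain_concat k c) = Suc k * m"
  unfolding chain_concat_def by (rule length_concat_blocks) (auto simp: cube_chainsD)

lemma chain_le_iff_cube_le_concat:
  "\<forall>i\<le>k. length (c i) = m \<Longrightarrow> \<forall>i\<le>k. length (d i) = m \<Longrightarrow>
   chain_le k cube_le c d \<longleftrightarrow> cube_le (chain_concat k c) (chain_concat k d)"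
  unfolding chain_concat_def chain_le_def
  by (subst cube_le_concat_blocks[where m = m]) (auto simp: less_Suc_eq_le)

lemma cube_chains_le_iff_cube_le_concat:
  "c \<in> cube_chains k m \<Longrightarrow> d \<in> cube_chains k m \<Longrightarrow>
   chain_le k cube_le c d \<longleftrightarrow> cube_le (chain_concat k c) (chain_concat k d)"
  by (rule chain_le_iff_cube_le_concat[where m = m]) (simp_all add: cube_chainsD)

lemma chain_split_chain_concat:
  assumes c: "c \<in> cube_chains k m"
  shows "chain_split k m (chain_concat k c) = c"
proof
  fix i
  show "chain_split k m (chain_concat k c) i = c i"
  proof (cases "i \<le> k")
    case True
    have "\<forall>j<Suc k. length (c j) = m"
      using c by (simp add: cube_chainsD less_Suc_eq_le)
    then show ?thesis
      using True block_concat_blocks[of "Suc k" c m i]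
      by (simp add: chain_split_def chain_concat_def del: upt_Suc)
  next
    case False
    then show ?thesis
      using c by (simp add: chain_split_def cube_chains_iff extensional_def)
  qed
qed

lemma chain_concat_chain_split: "length l = Suc k * m \<Longrightarrow> chain_concat k (chain_split k m l) = l"
proof -
  assume l: "length l = Suc k * m"
  have "chain_concat k (chain_split k m l) = concat (map (\<lambda>i. take m (drop (i * m) l)) [0..<Suc k])"
    unfolding chain_concat_def chain_split_def by (intro arg_cong[where f = concat] map_cong) auto
  then show ?thesis
    using l by (simp add: concat_blocks_take)
qed

lemma length_chain_split: "length l = Suc k * m \<Longrightarrow> i \<le> k \<Longrightarrow> length (chain_split k m l i) = m"
proof -
  assume "length l = Suc k * m" "i \<le> k"
  moreover have "i * m \<le> k * m"
    using \<open>i \<le> k\<close> by (rule mult_le_mono1)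
  then have "m \<le> m + k * m - i * m"
    by linarith
  then have "min (m + k * m - i * m) m = m"
    by (rule min.absorb2)
  ultimately show ?thesis
    by (simp add: chain_split_def)
qed

text \<open>For a thin interval [x, z] the chain condition is automatic for lists between x and z, so
  concatenation identifies [x, z] with a face of [1]^((k + 1) m).\<close>

definition thin :: "nat \<Rightarrow> (nat \<Rightarrow> bool list) \<Rightarrow> (nat \<Rightarrow> bool list) \<Rightarrow> bool" where
  "thin k x z \<longleftrightarrow> (\<forall>i<k. cube_le (z i) (x (Suc i)))"

lemma bij_betw_chain_concat:
  assumes x: "x \<in> cube_chains k m" and z: "z \<in> cube_chains k m" and thin: "thin k x z"
  shows "bij_betw (chain_concat k) (chain_interval k m x z)
    (cube_interval (Suc k * m) (chain_concat k x) (chain_concat k z))"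
proof (rule bij_betw_byWitness[where f' = "chain_split k m"])
  show "\<forall>c\<in>chain_interval k m x z. chain_split k m (chain_concat k c) = c"
    by (simp add: interval_def chain_split_chain_concat)
  show "\<forall>l\<in>cube_interval (Suc k * m) (chain_concat k x) (chain_concat k z).
      chain_concat k (chain_split k m l) = l"
    by (simp add: cube_interval_def chain_concat_chain_split)
  show "chain_concat k ` chain_interval k m x z \<subseteq>
      cube_interval (Suc k * m) (chain_concat k x) (chain_concat k z)"
    using x z by (auto simp: interval_def cube_interval_def length_chain_concat
        cube_chains_le_iff_cube_le_concat[symmetric])
  show "chain_split k m ` cube_interval (Suc k * m) (chain_concat k x) (chain_concat k z) \<subseteq>
      chain_interval k m x z"
  proof clarify
    fix l assume l: "l \<in> cube_interval (Suc k * m) (chain_concat k x) (chain_concat k z)"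
    let ?c = "chain_split k m l"
    have lengths: "\<forall>i\<le>k. length (?c i) = m"
      using l by (simp add: cube_interval_def length_chain_split)
    moreover have "chain_concat k ?c = l"
      using l by (simp add: cube_interval_def chain_concat_chain_split)
    moreover have "chain_le k cube_le x ?c \<longleftrightarrow> cube_le (chain_concat k x) (chain_concat k ?c)"
      "chain_le k cube_le ?c z \<longleftrightarrow> cube_le (chain_concat k ?c) (chain_concat k z)"
      using lengths x z by (simp_all add: chain_le_iff_cube_le_concat[where m = m] cube_chainsD)
    ultimately have xc: "chain_le k cube_le x ?c" and cz: "chain_le k cube_le ?c z"
      using l by (simp_all add: cube_interval_def)
    have "cube_le (?c i) (?c (Suc i))" if "i < k" for i
    proof -
      have "cube_le (?c i) (z i)" "cube_le (x (Suc i)) (?c (Suc i))"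
        using xc cz that by (simp_all add: chain_le_def)
      then show ?thesis
        using thin that by (meson cube_le_trans thin_def)
    qed
    then have "?c \<in> cube_chains k m"
      using lengths by (intro cube_chainsI) (simp_all add: chain_split_def)
    then show "?c \<in> chain_interval k m x z"
      using xc cz by (simp add: interval_def)
  qed
qed

definition chain_coords :: "nat \<Rightarrow> (nat \<Rightarrow> bool list) \<Rightarrow> (nat \<Rightarrow> bool list) \<Rightarrow> (nat \<Rightarrow> bool list) \<Rightarrow> bool list" where
  "chain_coords k x z c = face_coords (chain_concat k x) (chain_concat k z) (chain_concat k c)"

lemma cube_iso_face_coords:
  assumes "length u = m" "cube_le u v"
  shows "cube_iso (cube_interval m u v) cube_le (face_dim u v) (face_coords u v)"
  unfolding cube_iso_def
proof
  show "bij_betw (face_coords u v) (cube_interval m u v) (cube (face_dim u v))"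
  proof (rule bij_betw_byWitness[where f' = "face_point u v"])
    show "\<forall>y\<in>cube_interval m u v. face_point u v (face_coords u v y) = y"
      by (simp add: cube_interval_def face_point_face_coords)
    show "\<forall>w\<in>cube (face_dim u v). face_coords u v (face_point u v w) = w"
      using assms cube_le_length by (simp add: face_coords_face_point)
    show "face_coords u v ` cube_interval m u v \<subseteq> cube (face_dim u v)"
      using assms cube_le_length by (auto simp: cube_interval_def length_face_coords)
    show "face_point u v ` cube (face_dim u v) \<subseteq> cube_interval m u v"
      using assms cube_le_length face_point_between
      by (fastforce simp: cube_interval_def length_face_point)
  qed
  show "\<forall>p\<in>cube_interval m u v. \<forall>q\<in>cube_interval m u v.
      cube_le p q \<longleftrightarrow> cube_le (face_coords u v p) (face_coords u v q)"
    by (simp add: cube_interval_def face_coords_cube_le_iff)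
qed

lemma cube_iso_chain_coords:
  assumes x: "x \<in> cube_chains k m" and z: "z \<in> cube_chains k m"
    and xz: "chain_le k cube_le x z" and thin: "thin k x z"
  shows "cube_iso (chain_interval k m x z) (chain_le k cube_le)
    (face_dim (chain_concat k x) (chain_concat k z)) (chain_coords k x z)"
proof -
  have "\<forall>a\<in>chain_interval k m x z. \<forall>b\<in>chain_interval k m x z.
      chain_le k cube_le a b \<longleftrightarrow> cube_le (chain_concat k a) (chain_concat k b)"
    unfolding interval_def using cube_chains_le_iff_cube_le_concat by blast
  moreover have "cube_iso (cube_interval (Suc k * m) (chain_concat k x) (chain_concat k z)) cube_le
      (face_dim (chain_concat k x) (chain_concat k z)) (face_coords (chain_concat k x) (chain_concat k z))"
    using x z xz by (simp add: cube_iso_face_coords length_chain_concat cube_chains_le_iff_cube_le_concat)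
  ultimately have "cube_iso (chain_interval k m x z) (chain_le k cube_le)
      (face_dim (chain_concat k x) (chain_concat k z))
      (face_coords (chain_concat k x) (chain_concat k z) \<circ> chain_concat k)"
    by (rule cube_iso_comp_order_iso[OF bij_betw_chain_concat[OF x z thin]])
  then show ?thesis
    by (simp add: comp_def chain_coords_def[abs_def])
qed

lemma cube_le_map2_conj_mono:
  "cube_le a a' \<Longrightarrow> cube_le b b' \<Longrightarrow> length a = length b \<Longrightarrow>
   cube_le (map2 (\<and>) a b) (map2 (\<and>) a' b')"
  by (auto simp: cube_le_iff_nth)

lemma cube_le_map2_disj_mono:
  "cube_le a a' \<Longrightarrow> cube_le b b' \<Longrightarrow> length a = length b \<Longrightarrow>
   cube_le (map2 (\<or>) a b) (map2 (\<or>) a' b')"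
  by (auto simp: cube_le_iff_nth)

lemma map2_conj_cube_le:
  "length a = length b \<Longrightarrow> cube_le (map2 (\<and>) a b) a"
  "length a = length b \<Longrightarrow> cube_le (map2 (\<and>) a b) b"
  by (simp_all add: cube_le_iff_nth)

lemma cube_le_map2_conj: "cube_le c a \<Longrightarrow> cube_le c b \<Longrightarrow> cube_le c (map2 (\<and>) a b)"
  by (auto simp: cube_le_iff_nth)

lemma cube_le_map2_disj:
  "length a = length b \<Longrightarrow> cube_le a (map2 (\<or>) a b)"
  "length a = length b \<Longrightarrow> cube_le b (map2 (\<or>) a b)"
  by (simp_all add: cube_le_iff_nth)

lemma map2_disj_cube_le: "cube_le a c \<Longrightarrow> cube_le b c \<Longrightarrow> cube_le (map2 (\<or>) a b) c"
  by (auto simp: cube_le_iff_nth)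

definition chain_inf :: "nat \<Rightarrow> (nat \<Rightarrow> bool list) \<Rightarrow> (nat \<Rightarrow> bool list) \<Rightarrow> nat \<Rightarrow> bool list" where
  "chain_inf k c d = restrict (\<lambda>i. map2 (\<and>) (c i) (d i)) {..k}"

definition chain_sup :: "nat \<Rightarrow> (nat \<Rightarrow> bool list) \<Rightarrow> (nat \<Rightarrow> bool list) \<Rightarrow> nat \<Rightarrow> bool list" where
  "chain_sup k c d = restrict (\<lambda>i. map2 (\<or>) (c i) (d i)) {..k}"

lemma chain_interval_iff:
  "c \<in> chain_interval k m x z \<longleftrightarrow> c \<in> extensional {..k} \<and>
     (\<forall>i\<le>k. length (c i) = m \<and> cube_le (x i) (c i) \<and> cube_le (c i) (z i)) \<and>
     (\<forall>i j. i \<le> j \<and> j \<le> k \<longrightarrow> cube_le (c i) (c j))"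
  by (auto simp: interval_def cube_chains_iff chain_le_def)

lemma chain_inf_mem_interval:
  assumes c: "c \<in> chain_interval k m x z" and d: "d \<in> chain_interval k m x z"
  shows "chain_inf k c d \<in> chain_interval k m x z"
    and "chain_le k cube_le (chain_inf k c d) c" "chain_le k cube_le (chain_inf k c d) d"
proof -
  have cd: "length (c i) = m" "length (d i) = m" "cube_le (x i) (c i)" "cube_le (x i) (d i)"
    "cube_le (c i) (z i)" if "i \<le> k" for i
    using c d that by (simp_all add: chain_interval_iff)
  have le: "cube_le (map2 (\<and>) (c i) (d i)) (c i)" "cube_le (map2 (\<and>) (c i) (d i)) (d i)"
    if "i \<le> k" for i
    using cd that by (simp_all add: map2_conj_cube_le)
  then show "chain_le k cube_le (chain_inf k c d) c" "chain_le k cube_le (chain_inf k c d) d"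
    by (simp_all add: chain_le_def chain_inf_def)
  have "cube_le (map2 (\<and>) (c i) (d i)) (map2 (\<and>) (c j) (d j))" if "i \<le> j" "j \<le> k" for i j
    using c d that cd by (intro cube_le_map2_conj_mono) (simp_all add: chain_interval_iff)
  moreover have "cube_le (map2 (\<and>) (c i) (d i)) (z i)" if "i \<le> k" for i
    using le cd that cube_le_trans by blast
  ultimately show "chain_inf k c d \<in> chain_interval k m x z"
    using cd by (simp add: chain_interval_iff chain_inf_def cube_le_map2_conj)
qed

lemma chain_sup_mem_interval:
  assumes c: "c \<in> chain_interval k m x z" and d: "d \<in> chain_interval k m x z"
  shows "chain_sup k c d \<in> chain_interval k m x z"
    and "chain_le k cube_le c (chain_sup k c d)" "chain_le k cube_le d (chain_sup k c d)"
proof -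
  have cd: "length (c i) = m" "length (d i) = m" "cube_le (c i) (z i)" "cube_le (d i) (z i)"
    "cube_le (x i) (c i)" if "i \<le> k" for i
    using c d that by (simp_all add: chain_interval_iff)
  have le: "cube_le (c i) (map2 (\<or>) (c i) (d i))" "cube_le (d i) (map2 (\<or>) (c i) (d i))"
    if "i \<le> k" for i
    using cd that by (simp_all add: cube_le_map2_disj)
  then show "chain_le k cube_le c (chain_sup k c d)" "chain_le k cube_le d (chain_sup k c d)"
    by (simp_all add: chain_le_def chain_sup_def)
  have "cube_le (map2 (\<or>) (c i) (d i)) (map2 (\<or>) (c j) (d j))" if "i \<le> j" "j \<le> k" for i j
    using c d that cd by (intro cube_le_map2_disj_mono) (simp_all add: chain_interval_iff)
  moreover have "cube_le (x i) (map2 (\<or>) (c i) (d i))" if "i \<le> k" for i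
    using le cd that cube_le_trans by blast
  ultimately show "chain_sup k c d \<in> chain_interval k m x z"
    using cd by (simp add: chain_interval_iff chain_sup_def map2_disj_cube_le)
qed

lemma cube_le_complement_bot:
  "cube_le u y \<Longrightarrow> cube_le u (map Not y) \<Longrightarrow> u = replicate (length u) False"
  by (auto simp: cube_le_iff_nth intro: nth_equalityI)

lemma cube_le_complement_top:
  assumes "cube_le y u" "cube_le (map Not y) u"
  shows "u = replicate (length u) True"
proof (rule nth_equalityI)
  fix j assume "j < length u"
  then show "u ! j = replicate (length u) True ! j"
    using assms by (cases "y ! j") (auto simp: cube_le_iff_nth)
qed simp

lemma top_cube_le_iff: "length y = K \<Longrightarrow> cube_le (replicate K True) y \<longleftrightarrow> y = replicate K True"
proof
  assume "length y = K" "cube_le (replicate K True) y"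
  then show "y = replicate K True"
    by (auto simp: cube_le_iff_nth intro: nth_equalityI)
qed simp

lemma cube_iso_complement_lower_bound:
  assumes \<iota>: "cube_iso J le K \<iota>" and x: "x \<in> J" "\<forall>a\<in>J. le x a"
    and yw: "y \<in> J" "w \<in> J" "\<iota> w = map Not (\<iota> y)" and u: "u \<in> J" "le u y" "le u w"
  shows "u = x"
proof -
  have "cube_le (\<iota> u) (\<iota> y)" "cube_le (\<iota> u) (map Not (\<iota> y))" "cube_le (\<iota> x) (\<iota> u)"
    using \<iota> x yw u by (auto simp: cube_iso_def)
  then have "\<iota> x = \<iota> u"
    using cube_le_complement_bot cube_le_bot_iff by metis
  then show ?thesis
    using \<iota> x u by (auto simp: cube_iso_def bij_betw_def dest: inj_onD)
qed

lemma cube_iso_complement_upper_bound: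
  assumes \<iota>: "cube_iso J le K \<iota>" and z: "z \<in> J" "\<forall>a\<in>J. le a z"
    and yw: "y \<in> J" "w \<in> J" "\<iota> w = map Not (\<iota> y)" and u: "u \<in> J" "le y u" "le w u"
  shows "u = z"
proof -
  have "cube_le (\<iota> y) (\<iota> u)" "cube_le (map Not (\<iota> y)) (\<iota> u)" "cube_le (\<iota> u) (\<iota> z)"
    using \<iota> z yw u by (auto simp: cube_iso_def)
  moreover have "length (\<iota> z) = K" "length (\<iota> u) = K"
    using cube_iso_apply[OF \<iota> z(1)] cube_iso_apply[OF \<iota> u(1)] by simp_all
  ultimately have "\<iota> z = \<iota> u"
    using cube_le_complement_top top_cube_le_iff by metis
  then show ?thesis
    using \<iota> z u by (auto simp: cube_iso_def bij_betw_def dest: inj_onD)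
qed

lemma chain_interval_complement:
  assumes x: "x \<in> cube_chains k m" and z: "z \<in> cube_chains k m" and xz: "chain_le k cube_le x z"
    and \<iota>: "cube_iso (chain_interval k m x z) (chain_le k cube_le) K \<iota>"
    and y: "y \<in> chain_interval k m x z"
  obtains w where "w \<in> chain_interval k m x z" "chain_inf k y w = x" "chain_sup k y w = z"
proof
  let ?J = "chain_interval k m x z"
  let ?w = "inv_into ?J \<iota> (map Not (\<iota> y))"
  have "map Not (\<iota> y) \<in> cube K"
    using cube_iso_apply[OF \<iota> y] by simp
  then have w: "?w \<in> ?J" "\<iota> ?w = map Not (\<iota> y)"
    by (rule cube_iso_inv_into[OF \<iota>])+
  then show "?w \<in> ?J"
    by blast
  have "x \<in> ?J" "\<forall>a\<in>?J. chain_le k cube_le x a" "z \<in> ?J" "\<forall>a\<in>?J. chain_le k cube_le a z"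
    using x z xz by (auto simp: interval_def chain_le_def)
  then show "chain_inf k y ?w = x" "chain_sup k y ?w = z"
    using y w chain_inf_mem_interval[OF y w(1)] chain_sup_mem_interval[OF y w(1)]
    by (intro cube_iso_complement_lower_bound[OF \<iota>, of x y ?w]
        cube_iso_complement_upper_bound[OF \<iota>, of z y ?w]; simp)+
qed

lemma chain_interval_switch_on:
  assumes x: "x \<in> cube_chains k m" and z: "z \<in> cube_chains k m" and xz: "chain_le k cube_le x z"
    and j: "j < m"
  obtains y where "y \<in> chain_interval k m x z" "\<forall>i'\<le>k. y i' ! j \<longleftrightarrow> x i' ! j \<or> (i < i' \<and> z i' ! j)"
proof
  let ?y = "restrict (\<lambda>i'. (x i')[j := x i' ! j \<or> (i < i' \<and> z i' ! j)]) {..k}"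
  have xz': "length (x i') = m" "cube_le (x i') (z i')" if "i' \<le> k" for i'
    using x xz that by (simp_all add: cube_chainsD chain_le_def)
  have mono: "x i1 ! q \<Longrightarrow> x i2 ! q" "z i1 ! q \<Longrightarrow> z i2 ! q"
    if "i1 \<le> i2" "i2 \<le> k" "q < m" for i1 i2 q
    using that cube_chainsD[OF x] cube_chainsD[OF z] by (metis cube_le_nthD le_trans)+
  have y_nth: "?y i' ! q \<longleftrightarrow> (if q = j then x i' ! j \<or> (i < i' \<and> z i' ! j) else x i' ! q)"
    if "i' \<le> k" "q < m" for i' q
    using xz' that j by (simp add: nth_list_update)
  then show "\<forall>i'\<le>k. ?y i' ! j \<longleftrightarrow> x i' ! j \<or> (i < i' \<and> z i' ! j)"
    using j by simp
  have y_len: "length (?y i') = m" if "i' \<le> k" for i'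
    using xz' that by simp
  have "cube_le (?y i1) (?y i2)" if "i1 \<le> i2" "i2 \<le> k" for i1 i2
    using that y_nth y_len mono by (auto simp: cube_le_iff_nth)
  moreover have "cube_le (x i') (?y i')" "cube_le (?y i') (z i')" if "i' \<le> k" for i'
    using that y_nth y_len xz' by (auto simp: cube_le_iff_nth)
  ultimately show "?y \<in> chain_interval k m x z"
    using y_len by (simp add: chain_interval_iff)
qed

text \<open>If \<open>z i \<le> x (i + 1)\<close> fails at coordinate j, switching on coordinate j of x after position i
  gives an element y of [x, z]. Its complement w must satisfy \<open>y \<sqinter> w = x\<close> and \<open>y \<squnion> w = z\<close>, which is
  impossible at coordinate j of the entries i and i + 1.\<close>

lemma boolean_chain_interval_thin:
  assumes x: "x \<in> cube_chains k m" and z: "z \<in> cube_chains k m" and xz: "chain_le k cube_le x z"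
    and \<iota>: "cube_iso (chain_interval k m x z) (chain_le k cube_le) K \<iota>"
  shows "thin k x z"
  unfolding thin_def
proof (intro allI impI)
  fix i assume i: "i < k"
  show "cube_le (z i) (x (Suc i))"
  proof (rule ccontr)
    assume "\<not> cube_le (z i) (x (Suc i))"
    then obtain j where j: "j < m" "z i ! j" "\<not> x (Suc i) ! j"
      using i x z by (auto simp: cube_le_iff_nth cube_chainsD)
    obtain y where y: "y \<in> chain_interval k m x z" "\<forall>i'\<le>k. y i' ! j \<longleftrightarrow> x i' ! j \<or> (i < i' \<and> z i' ! j)"
      using chain_interval_switch_on[OF x z xz j(1)] by blast
    obtain w where w: "w \<in> chain_interval k m x z" "chain_inf k y w = x" "chain_sup k y w = z"
      using chain_interval_complement[OF x z xz \<iota> y(1)] by blast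
    have lengths: "length (x i') = m" "length (z i') = m" "length (y i') = m" "length (w i') = m"
      if "i' \<le> k" for i'
      using x z y(1) w(1) that by (simp_all add: cube_chainsD chain_interval_iff)
    then have inf_nth: "x i' ! j \<longleftrightarrow> y i' ! j \<and> w i' ! j"
      and sup_nth: "z i' ! j \<longleftrightarrow> y i' ! j \<or> w i' ! j" if "i' \<le> k" for i'
      using that j(1) w(2,3) by (auto simp: chain_inf_def chain_sup_def)
    have "cube_le (x i) (x (Suc i))" "cube_le (z i) (z (Suc i))" "cube_le (w i) (w (Suc i))"
      using x z w(1) i by (simp_all add: cube_chainsD chain_interval_iff)
    then have "\<not> x i ! j" "z (Suc i) ! j" and w_mono: "w i ! j \<Longrightarrow> w (Suc i) ! j"
      using lengths[of i] i j by (auto dest: cube_le_nthD)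
    then have "w i ! j" "y (Suc i) ! j"
      using sup_nth[of i] y(2) i j by auto
    then show False
      using inf_nth[of "Suc i"] w_mono i j by simp
  qed
qed

section \<open>Postcomposition with maps of chains\<close>

lemma sq_set_iff:
  "\<theta> \<in> sq_set C P le N \<longleftrightarrow> \<theta> \<in> ner P le N \<and>
     (\<exists>x\<in>P. \<exists>z\<in>P. \<exists>K \<iota>. le x z \<and> cube_iso (interval P le x z) le K \<iota> \<and>
        \<theta> ` cube N \<subseteq> interval P le x z \<and> sq_mor C N K (\<iota> \<circ> \<theta>))"
  by (simp add: sq_set_def cube_iso_def)

lemma unique_lift_postcomp:
  assumes "\<And>N \<theta>. \<theta> \<in> sq_set C P leP N \<Longrightarrow> restrict (f \<circ> \<theta>) (cube N) \<in> sq_set C Q leQ N"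
  shows "unique_lift C P leP Q leQ f"
proof -
  let ?F = "\<lambda>N \<theta>. restrict (f \<circ> \<theta>) (cube N)"
  have "?F a (restrict (\<theta> \<circ> \<psi>) (cube a)) = restrict (?F b \<theta> \<circ> \<psi>) (cube a)"
    if "sq_mor C a b \<psi>" for a b \<psi> \<theta>
    using sq_mor_cube_map[OF that] by (auto simp: cube_mapD fun_eq_iff)
  then have "cset_mor C (sq_set C P leP) (sq_set C Q leQ) ?F"
    using assms by (simp add: cset_mor_def)
  then show ?thesis
    by (auto simp: unique_lift_def commutes_with_ner_def)
qed

locale chain_map =
  fixes C :: sqcat and k m k' n :: nat
    and f :: "(nat \<Rightarrow> bool list) \<Rightarrow> (nat \<Rightarrow> bool list)" and \<Phi> :: "bool list \<Rightarrow> bool list"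
  assumes sq_mor: "sq_mor C (Suc k * m) (Suc k' * n) \<Phi>"
    and maps_chains: "c \<in> cube_chains k m \<Longrightarrow> f c \<in> cube_chains k' n"
    and chain_concat_map: "c \<in> cube_chains k m \<Longrightarrow> chain_concat k' (f c) = \<Phi> (chain_concat k c)"
    and thin: "x \<in> cube_chains k m \<Longrightarrow> z \<in> cube_chains k m \<Longrightarrow> thin k x z \<Longrightarrow> thin k' (f x) (f z)"
begin

lemma mono:
  assumes "c \<in> cube_chains k m" "d \<in> cube_chains k m" "chain_le k cube_le c d"
  shows "chain_le k' cube_le (f c) (f d)"
proof -
  have "cube_le (chain_concat k c) (chain_concat k d)"
    using assms by (simp add: cube_chains_le_iff_cube_le_concat)
  then have "cube_le (\<Phi> (chain_concat k c)) (\<Phi> (chain_concat k d))"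
    using assms sq_mor_cube_map[OF sq_mor] by (simp add: cube_mapD length_chain_concat)
  then show ?thesis
    using cube_chains_le_iff_cube_le_concat[OF maps_chains[OF assms(1)] maps_chains[OF assms(2)]]
    by (simp add: chain_concat_map assms)
qed

lemma maps_interval:
  assumes "x \<in> cube_chains k m" "z \<in> cube_chains k m" "c \<in> chain_interval k m x z"
  shows "f c \<in> chain_interval k' n (f x) (f z)"
  using assms by (auto simp: interval_def maps_chains mono)

lemma chain_coords_map:
  assumes x: "x \<in> cube_chains k m" and z: "z \<in> cube_chains k m" and c: "c \<in> chain_interval k m x z"
  shows "chain_coords k' (f x) (f z) (f c) =
    face_restrict \<Phi> (chain_concat k x) (chain_concat k z) (chain_coords k x z c)"
proof -
  have "chain_concat k c \<in> cube_interval (Suc k * m) (chain_concat k x) (chain_concat k z)"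
    using x z c by (auto simp: interval_def cube_interval_def length_chain_concat
        cube_chains_le_iff_cube_le_concat[symmetric])
  then show ?thesis
    using x z c
    by (simp add: chain_coords_def face_restrict_def face_point_face_coords cube_interval_def
        chain_concat_map interval_def)
qed

lemma sq_set_postcomp:
  assumes \<theta>: "\<theta> \<in> sq_set C (cube_chains k m) (chain_le k cube_le) N"
  shows "restrict (f \<circ> \<theta>) (cube N) \<in> sq_set C (cube_chains k' n) (chain_le k' cube_le) N"
proof -
  obtain x z K \<iota> where x: "x \<in> cube_chains k m" and z: "z \<in> cube_chains k m"
    and xz: "chain_le k cube_le x z" and \<iota>: "cube_iso (chain_interval k m x z) (chain_le k cube_le) K \<iota>"
    and \<theta>_J: "\<theta> ` cube N \<subseteq> chain_interval k m x z" and \<iota>\<theta>: "sq_mor C N K (\<iota> \<circ> \<theta>)"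
    using \<theta> unfolding sq_set_iff by blast
  let ?X = "chain_concat k x" and ?Z = "chain_concat k z" and ?F = "restrict (f \<circ> \<theta>) (cube N)"
  have thin_xz: "thin k x z"
    using x z xz \<iota> by (rule boolean_chain_interval_thin)
  have x': "f x \<in> cube_chains k' n" "f z \<in> cube_chains k' n" "chain_le k' cube_le (f x) (f z)"
    using x z xz by (simp_all add: maps_chains mono)
  have \<iota>': "cube_iso (chain_interval k' n (f x) (f z)) (chain_le k' cube_le)
      (face_dim (chain_concat k' (f x)) (chain_concat k' (f z))) (chain_coords k' (f x) (f z))"
    using x' thin[OF x z thin_xz] by (rule cube_iso_chain_coords)
  have "?F \<in> ner (cube_chains k' n) (chain_le k' cube_le) N"
    using \<theta> \<theta>_J maps_chains mono
    by (auto simp: sq_set_def ner_def mono_betw_def interval_def subset_iff)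
  moreover have "?F ` cube N \<subseteq> chain_interval k' n (f x) (f z)"
    using \<theta>_J x z maps_interval by auto
  \<comment> \<open>In the new coordinates, \<open>f \<circ> \<theta>\<close> is \<open>\<iota> \<circ> \<theta>\<close>, followed by a change of coordinates of [x, z]
    and the restriction of \<open>\<Phi>\<close> to the face of [x, z].\<close>
  moreover have "sq_mor C N (face_dim (chain_concat k' (f x)) (chain_concat k' (f z)))
      (chain_coords k' (f x) (f z) \<circ> ?F)"
  proof (rule sq_mor_cong)
    have "sq_mor C K (face_dim ?X ?Z) (chain_coords k x z \<circ> inv_into (chain_interval k m x z) \<iota>)"
      using cube_iso_comp_inv[OF \<iota> cube_iso_chain_coords[OF x z xz thin_xz]] by (rule sq_mor_cube_iso)
    moreover have "sq_mor C (face_dim ?X ?Z) (face_dim (\<Phi> ?X) (\<Phi> ?Z)) (face_restrict \<Phi> ?X ?Z)"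
      using sq_mor x z xz by (simp add: sq_mor_face_restrict length_chain_concat cube_chains_le_iff_cube_le_concat)
    ultimately show "sq_mor C N (face_dim (chain_concat k' (f x)) (chain_concat k' (f z)))
        (face_restrict \<Phi> ?X ?Z \<circ> (chain_coords k x z \<circ> inv_into (chain_interval k m x z) \<iota>) \<circ> (\<iota> \<circ> \<theta>))"
      using \<iota>\<theta> x z by (simp add: chain_concat_map sq_mor_comp)
    show "\<forall>w\<in>cube N. (chain_coords k' (f x) (f z) \<circ> ?F) w =
        (face_restrict \<Phi> ?X ?Z \<circ> (chain_coords k x z \<circ> inv_into (chain_interval k m x z) \<iota>) \<circ> (\<iota> \<circ> \<theta>)) w"
      using \<theta>_J \<iota> x z by (auto simp: chain_coords_map cube_iso_def bij_betw_inv_into_left)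
  qed
  ultimately show ?thesis
    unfolding sq_set_iff using x' \<iota>' by blast
qed

end

section \<open>The two families of chain maps\<close>

definition cube_power :: "nat \<Rightarrow> (bool list \<Rightarrow> bool list) \<Rightarrow> nat \<Rightarrow> bool list \<Rightarrow> bool list" where
  "cube_power m \<phi> r l = concat (map (\<lambda>i. \<phi> (take m (drop (i * m) l))) [0..<r])"

lemma cube_power_Suc: "cube_power m \<phi> (Suc r) l = \<phi> (take m l) @ cube_power m \<phi> r (drop m l)"
proof -
  have "cube_power m \<phi> (Suc r) l = concat (map (\<lambda>i. \<phi> (take m (drop (i * m) l))) (0 # map Suc [0..<r]))"
    unfolding cube_power_def by (simp only: upt_conv_Cons map_Suc_upt zero_less_Suc)
  also have "\<dots> = \<phi> (take m l) @ concat (map (\<lambda>i. \<phi> (take m (drop (Suc i * m) l))) [0..<r])"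
    by (simp add: comp_def del: upt_Suc)
  also have "\<dots> = \<phi> (take m l) @ cube_power m \<phi> r (drop m l)"
    unfolding cube_power_def by (simp add: add.commute comp_def del: upt_Suc)
  finally show ?thesis .
qed

lemma sq_mor_cube_power: "sq_mor C m n \<phi> \<Longrightarrow> sq_mor C (r * m) (r * n) (cube_power m \<phi> r)"
proof (induction r)
  case 0
  then show ?case
    using sq_mor_Nil[of C 0] by (simp add: cube_power_def)
next
  case (Suc r)
  then show ?case
    using sq_mor_prod[OF Suc.prems Suc.IH[OF Suc.prems]] by (simp add: cube_power_Suc)
qed

lemma chain_map_post_map:
  assumes \<phi>: "sq_mor C m n \<phi>"
  shows "chain_map C k m k n (post_map k \<phi>) (cube_power m \<phi> (Suc k))"
proof
  have \<phi>': "cube_map m n \<phi>"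
    using \<phi> by (rule sq_mor_cube_map)
  show "sq_mor C (Suc k * m) (Suc k * n) (cube_power m \<phi> (Suc k))"
    using \<phi> by (rule sq_mor_cube_power)
  fix c assume c: "c \<in> cube_chains k m"
  then show "post_map k \<phi> c \<in> cube_chains k n"
    unfolding cube_chains_iff post_map_def using cube_mapD[OF \<phi>'] by simp
  have "\<forall>j<Suc k. length (c j) = m"
    using c by (simp add: cube_chainsD less_Suc_eq_le)
  then have "c i = take m (drop (i * m) (chain_concat k c))" if "i < Suc k" for i
    using that block_concat_blocks[of "Suc k" c m i] by (simp add: chain_concat_def del: upt_Suc)
  then have "map (\<lambda>i. \<phi> (c i)) [0..<Suc k] =
      map (\<lambda>i. \<phi> (take m (drop (i * m) (chain_concat k c)))) [0..<Suc k]"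
    by (intro map_cong) (simp_all del: upt_Suc)
  moreover have "map (post_map k \<phi> c) [0..<Suc k] = map (\<lambda>i. \<phi> (c i)) [0..<Suc k]"
    by (intro map_cong) (simp_all add: post_map_def less_Suc_eq_le del: upt_Suc)
  ultimately show "chain_concat k (post_map k \<phi> c) = cube_power m \<phi> (Suc k) (chain_concat k c)"
    by (simp only: chain_concat_def[of k "post_map k \<phi> c"] cube_power_def)
next
  fix x z assume "x \<in> cube_chains k m" "z \<in> cube_chains k m" "thin k x z"
  then show "thin k (post_map k \<phi> x) (post_map k \<phi> z)"
    unfolding thin_def post_map_def using cube_mapD[OF sq_mor_cube_map[OF \<phi>]] by (simp add: cube_chainsD)
qed

fun select_blocks :: "nat \<Rightarrow> bool list \<Rightarrow> bool list \<Rightarrow> bool list" where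
  "select_blocks n [] l = []"
| "select_blocks n (b # bs) l = (if b then take n l else []) @ select_blocks n bs (drop n l)"

lemma sq_mor_select_blocks: "sq_mor C (length bs * n) (length (filter id bs) * n) (select_blocks n bs)"
proof (induction bs)
  case Nil
  then show ?case
    using sq_mor_Nil[of C 0] by (simp add: fun_eq_iff)
next
  case (Cons b bs)
  have "sq_mor C n (if b then n else 0) (if b then (\<lambda>xs. xs) else (\<lambda>xs. []))"
    by (simp add: sq_mor_id sq_mor_Nil)
  from sq_mor_prod[OF this Cons.IH] show ?case
    by (cases b) (simp_all add: fun_eq_iff)
qed

lemma select_blocks_eq:
  "select_blocks n bs l = concat (map (\<lambda>i. take n (drop (i * n) l)) (filter (\<lambda>i. bs ! i) [0..<length bs]))"
proof (induction bs arbitrary: l)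
  case (Cons b bs)
  have "[0..<length (b # bs)] = 0 # map Suc [0..<length bs]"
    by (simp only: length_Cons upt_conv_Cons map_Suc_upt zero_less_Suc)
  then have "filter (\<lambda>i. (b # bs) ! i) [0..<length (b # bs)] =
      (if b then [0] else []) @ map Suc (filter (\<lambda>i. bs ! i) [0..<length bs])"
    by (simp add: filter_map comp_def)
  then show ?case
    using Cons.IH[of "drop n l"] by (simp add: comp_def add.commute)
qed simp

lemma filter_mem_image_upt:
  assumes \<delta>: "\<delta> \<in> {..k1} \<rightarrow> {..k2}" and mono: "\<forall>i j. i < j \<and> j \<le> k1 \<longrightarrow> \<delta> i < \<delta> j"
  shows "filter (\<lambda>i. i \<in> \<delta> ` {..k1}) [0..<Suc k2] = map \<delta> [0..<Suc k1]"
proof (rule sorted_distinct_set_unique)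
  have "sorted_wrt (<) (filter (\<lambda>i. i \<in> \<delta> ` {..k1}) [0..<Suc k2])"
    by (rule sorted_wrt_filter) (rule sorted_wrt_upt)
  then show "sorted (filter (\<lambda>i. i \<in> \<delta> ` {..k1}) [0..<Suc k2])"
    "distinct (filter (\<lambda>i. i \<in> \<delta> ` {..k1}) [0..<Suc k2])"
    by (simp_all add: strict_sorted_iff)
  have "sorted_wrt (\<lambda>x y. \<delta> x < \<delta> y) [0..<Suc k1]"
    by (rule sorted_wrt_mono_rel[of _ "(<)", OF _ sorted_wrt_upt]) (use mono in auto)
  then have "sorted_wrt (<) (map \<delta> [0..<Suc k1])"
    by (simp only: sorted_wrt_map)
  then show "sorted (map \<delta> [0..<Suc k1])" "distinct (map \<delta> [0..<Suc k1])"
    by (simp_all add: strict_sorted_iff)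
  have "set (filter (\<lambda>i. i \<in> \<delta> ` {..k1}) [0..<Suc k2]) = {i \<in> {0..<Suc k2}. i \<in> \<delta> ` {..k1}}"
    by (simp only: set_filter set_upt)
  also have "\<dots> = \<delta> ` {..k1}"
    using \<delta> by (auto simp: less_Suc_eq_le)
  also have "\<dots> = set (map \<delta> [0..<Suc k1])"
    by (simp only: set_map set_upt atLeast0LessThan lessThan_Suc_atMost)
  finally show "set (filter (\<lambda>i. i \<in> \<delta> ` {..k1}) [0..<Suc k2]) = set (map \<delta> [0..<Suc k1])" .
qed

lemma image_mask_select:
  assumes \<delta>: "\<delta> \<in> {..k1} \<rightarrow> {..k2}" and mono: "\<forall>i j. i < j \<and> j \<le> k1 \<longrightarrow> \<delta> i < \<delta> j"
    and bs: "bs = map (\<lambda>i. i \<in> \<delta> ` {..k1}) [0..<Suc k2]"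
  shows "filter (\<lambda>i. bs ! i) [0..<length bs] = map \<delta> [0..<Suc k1]"
    and "length (filter id bs) = Suc k1"
proof -
  have "filter (\<lambda>i. bs ! i) [0..<length bs] = filter (\<lambda>i. i \<in> \<delta> ` {..k1}) [0..<Suc k2]"
    by (rule filter_cong) (simp_all add: bs del: upt_Suc)
  then show "filter (\<lambda>i. bs ! i) [0..<length bs] = map \<delta> [0..<Suc k1]"
    using filter_mem_image_upt[OF \<delta> mono] by simp
  have "length (filter id bs) = length (filter (\<lambda>i. i \<in> \<delta> ` {..k1}) [0..<Suc k2])"
    by (simp add: bs filter_map comp_def del: upt_Suc)
  then show "length (filter id bs) = Suc k1"
    using filter_mem_image_upt[OF \<delta> mono] by (simp del: upt_Suc)
qed

lemma chain_map_pre_map: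
  assumes \<delta>: "\<delta> \<in> {..k1} \<rightarrow> {..k2}" and mono: "\<forall>i j. i < j \<and> j \<le> k1 \<longrightarrow> \<delta> i < \<delta> j"
  defines "bs \<equiv> map (\<lambda>i. i \<in> \<delta> ` {..k1}) [0..<Suc k2]"
  shows "chain_map C k2 n k1 n (pre_map k1 \<delta>) (select_blocks n bs)"
proof
  have \<delta>_le: "\<delta> i \<le> k2" if "i \<le> k1" for i
    using \<delta> that by auto
  have \<delta>_mono: "\<delta> i \<le> \<delta> j" if "i \<le> j" "j \<le> k1" for i j
    using mono that by (cases "i = j") (auto simp: order.order_iff_strict)
  note selected = image_mask_select[OF \<delta> mono bs_def[THEN meta_eq_to_obj_eq]]
  then show "sq_mor C (Suc k2 * n) (Suc k1 * n) (select_blocks n bs)"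
    using sq_mor_select_blocks[of C bs n] by (simp add: bs_def del: upt_Suc)
  fix c assume c: "c \<in> cube_chains k2 n"
  then show "pre_map k1 \<delta> c \<in> cube_chains k1 n"
    using \<delta>_le \<delta>_mono by (auto simp: cube_chains_iff pre_map_def)
  have "\<forall>j<Suc k2. length (c j) = n"
    using c by (simp add: cube_chainsD less_Suc_eq_le)
  then have "c (\<delta> i) = take n (drop (\<delta> i * n) (chain_concat k2 c))" if "i < Suc k1" for i
    using that \<delta>_le block_concat_blocks[of "Suc k2" c n "\<delta> i"]
    by (simp add: chain_concat_def less_Suc_eq_le del: upt_Suc)
  then show "chain_concat k1 (pre_map k1 \<delta> c) = select_blocks n bs (chain_concat k2 c)"
    unfolding select_blocks_eq selected(1) chain_concat_def[of k1] pre_map_def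
    by (auto intro!: arg_cong[where f = concat])
next
  fix x z assume x: "x \<in> cube_chains k2 n" and thin: "thin k2 x z"
  have "cube_le (z (\<delta> i)) (x (\<delta> (Suc i)))" if i: "i < k1" for i
  proof -
    have "\<delta> i < \<delta> (Suc i)" "\<delta> (Suc i) \<le> k2"
      using mono \<delta> i by auto
    then have "cube_le (z (\<delta> i)) (x (Suc (\<delta> i)))" "cube_le (x (Suc (\<delta> i))) (x (\<delta> (Suc i)))"
      using thin cube_chainsD(2)[OF x] by (simp_all add: thin_def)
    then show ?thesis
      by (rule cube_le_trans)
  qed
  then show "thin k1 (pre_map k1 \<delta> x) (pre_map k1 \<delta> z)"
    by (simp add: thin_def pre_map_def)
qed

theorem mainTheorem14:
  fixes C :: sqcat
  shows "(\<forall>m n \<phi> k. sq_mor C m n \<phi> \<longrightarrow>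
            unique_lift C (chains k (cube m) cube_le) (chain_le k cube_le)
                          (chains k (cube n) cube_le) (chain_le k cube_le)
                          (post_map k \<phi>))
       \<and> (\<forall>n k1 k2 \<delta>. \<delta> \<in> {..k1} \<rightarrow> {..k2} \<and> (\<forall>i j. i < j \<and> j \<le> k1 \<longrightarrow> \<delta> i < \<delta> j) \<longrightarrow>
            unique_lift C (chains k2 (cube n) cube_le) (chain_le k2 cube_le)
                          (chains k1 (cube n) cube_le) (chain_le k1 cube_le)
                          (pre_map k1 \<delta>))"
proof (intro conjI allI impI)
  fix m n \<phi> k assume "sq_mor C m n \<phi>"
  then interpret chain_map C k m k n "post_map k \<phi>" "cube_power m \<phi> (Suc k)"
    by (rule chain_map_post_map)
  show "unique_lift C (cube_chains k m) (chain_le k cube_le) (cube_chains k n) (chain_le k cube_le)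
      (post_map k \<phi>)"
    by (rule unique_lift_postcomp) (rule sq_set_postcomp)
next
  fix n k1 k2 :: nat and \<delta> :: "nat \<Rightarrow> nat" assume "\<delta> \<in> {..k1} \<rightarrow> {..k2} \<and> (\<forall>i j. i < j \<and> j \<le> k1 \<longrightarrow> \<delta> i < \<delta> j)"
  then interpret chain_map C k2 n k1 n "pre_map k1 \<delta>"
      "select_blocks n (map (\<lambda>i. i \<in> \<delta> ` {..k1}) [0..<Suc k2])"
    by (intro chain_map_pre_map) simp_all
  show "unique_lift C (cube_chains k2 n) (chain_le k2 cube_le) (cube_chains k1 n) (chain_le k1 cube_le)
      (pre_map k1 \<delta>)"
    by (rule unique_lift_postcomp) (rule sq_set_postcomp)
qed

end
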